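(* Let $q$ be a prime power, $n$ a positive integer, $L(x)=\sum_{i=0}^{n-1}a_ix^{q^{2i}}$ with $a_i\in\mathbb F_{q^{2n}}$, and suppose $L$ has degree $q^{2m}$ for some nonnegative integer $m$. For $c\in\mathbb F_{q^2}$ let $N_c$ be the number of $u\in\mathbb F_{q^{2n}}$ with $\mathrm{Tr}(uL(u^q))+c=0$. Then $|N_c-q^{2(n-1)}|\le(q^2-1)q^{n+2m-1}$, and equality holds if and only if $c=0$ and $\dim\ker(\upsilon L^*+L)=2m+1$ for every $\upsilon\in U$. In this case $N_0-q^{2(n-1)}=(-1)^{n-1}(q^2-1)q^{n+2m-1}$.
   Context: $\mathrm{Tr}$ is the trace $\mathbb F_{q^{2n}}\to\mathbb F_{q^2}$. $L^*(x)=\sum_{i=0}^{n-1}(a_i^qx)^{q^{2(n-i-1)}}$. $U$ is the subgroup of order $q+1$ of $\mathbb F_{q^2}^*$. Kernels are those of the induced $\mathbb F_{q^2}$-linear maps on $\mathbb F_{q^{2n}}$, dimensions over $\mathbb F_{q^2}$. *)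

theory Defs
  imports "HOL-Computational_Algebra.Primes"
begin

definition subfield_q2 :: "nat \<Rightarrow> 'a::{field,finite} set" where
  "subfield_q2 q = {x. x ^ (q^2) = x}"

definition Tr :: "nat \<Rightarrow> nat \<Rightarrow> 'a::{field,finite} \<Rightarrow> 'a" where
  "Tr q n x = (\<Sum>j<n. x ^ (q ^ (2*j)))"

definition linpoly :: "nat \<Rightarrow> nat \<Rightarrow> (nat \<Rightarrow> 'a::{field,finite}) \<Rightarrow> 'a \<Rightarrow> 'a" where
  "linpoly q n a x = (\<Sum>i<n. a i * x ^ (q ^ (2*i)))"

definition linpoly_star :: "nat \<Rightarrow> nat \<Rightarrow> (nat \<Rightarrow> 'a::{field,finite}) \<Rightarrow> 'a \<Rightarrow> 'a" where
  "linpoly_star q n a x = (\<Sum>i<n. (a i ^ q * x) ^ (q ^ (2*(n - i - 1))))"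

definition U_grp :: "nat \<Rightarrow> 'a::{field,finite} set" where
  "U_grp q = {v. v \<in> subfield_q2 q \<and> v \<noteq> 0 \<and> v ^ (q+1) = 1}"

definition dim_q2 :: "nat \<Rightarrow> 'a::{field,finite} set \<Rightarrow> nat" where
  "dim_q2 q S = (THE d. card S = (q^2) ^ d)"

definition ker_map :: "nat \<Rightarrow> nat \<Rightarrow> (nat \<Rightarrow> 'a::{field,finite}) \<Rightarrow> 'a \<Rightarrow> 'a set" where
  "ker_map q n a v = {x. v * linpoly_star q n a x + linpoly q n a x = 0}"

definition Ncount :: "nat \<Rightarrow> nat \<Rightarrow> (nat \<Rightarrow> 'a::{field,finite}) \<Rightarrow> 'a \<Rightarrow> nat" where
  "Ncount q n a c = card {u. Tr q n (u * linpoly q n a (u ^ q)) + c = 0}"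

end

theory Submission
  imports Defs "HOL-Number_Theory.Residues" "HOL-Computational_Algebra.Polynomial"
begin

(* Put B u w = Tr (u * L (w^q)), so that N_c counts the zeros of B u u + c. For t in F_{q^2}^*,
   H_t u w = t * B u w + (t * B w u)^q is a Hermitian form over F_{q^2} whose diagonal is the
   trace to F_q of t * B u u; since L^* is the adjoint of L for the trace form, the radical of H_t
   is the Frobenius preimage of ker (t^(q-1) L^* + L). The classical count of vectors of given
   Hermitian norm therefore gives the number of u with (t (B u u + c))^q + t (B u u + c) = 0 in
   terms of the dimension e_t of that kernel alone. Summing over t counts every zero of B u u + c
   exactly q^2 - 1 times and every other u exactly q - 1 times, which writes
   q^2 (q - 1) (N_c - q^(2(n-1))) as a sum of q^2 - 1 terms of absolute value at most
   (q - 1) q^(n + e_t). Finally e_t <= 2m + 1, because the q^(2(m+1))-th power of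
   t^(q-1) L^* x + L x is a polynomial of degree q^(2(2m+1)) in x; equality in the bound forces
   every e_t to be maximal and every term to have the same sign, which happens exactly when c = 0. *)

section \<open>Roots of polynomials and fibres of maps\<close>

lemma card_le_degree_if_roots:
  fixes P :: "'a::field poly"
  assumes "P \<noteq> 0" and "\<And>x. x \<in> S \<Longrightarrow> poly P x = 0"
  shows "card S \<le> degree P"
proof -
  have "card S \<le> card {x. poly P x = 0}"
    using assms by (intro card_mono poly_roots_finite) auto
  also have "\<dots> \<le> degree P"
    by (rule card_poly_roots_bound[OF assms(1)])
  finally show ?thesis .
qed

lemma card_roots_monomial_sum_le:
  fixes g :: "'b \<Rightarrow> 'a::field"
  assumes "finite I" "i0 \<in> I" "g i0 \<noteq> 0" and lt: "\<And>i. i \<in> I - {i0} \<Longrightarrow> e i < e i0"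
  shows "card {x. (\<Sum>i\<in>I. g i * x ^ e i) = 0} \<le> e i0"
proof -
  define P where "P = (\<Sum>i\<in>I. monom (g i) (e i))"
  have le: "e i \<le> e i0" if "i \<in> I" for i
    using lt[of i] that by (cases "i = i0") auto
  have "coeff P (e i0) = (\<Sum>i\<in>I. if e i = e i0 then g i else 0)"
    by (simp add: P_def coeff_sum)
  also have "\<dots> = (\<Sum>i\<in>I. if i = i0 then g i else 0)"
    using lt by (intro sum.cong) fastforce+
  also have "\<dots> = g i0"
    using assms(1,2) by simp
  finally have "P \<noteq> 0"
    using assms(3) by auto
  moreover have "degree P \<le> e i0"
    unfolding P_def using le by (intro degree_sum_le[OF assms(1)] order.trans[OF degree_monom_le])
  moreover have "poly P x = (\<Sum>i\<in>I. g i * x ^ e i)" for x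
    by (simp add: P_def poly_sum poly_monom)
  ultimately show ?thesis
    using card_le_degree_if_roots[of P "{x. (\<Sum>i\<in>I. g i * x ^ e i) = 0}"] by simp
qed

lemma card_power_eq_const_le:
  assumes "N > 0"
  shows "card {x\<in>A. x ^ N = (c::'a::field)} \<le> N"
proof -
  have "degree (monom (1::'a) N + [:-c:]) = N"
    using assms by (subst degree_add_eq_left) (auto simp: degree_monom_eq)
  moreover from this have "monom (1::'a) N + [:-c:] \<noteq> 0"
    using assms by auto
  ultimately show ?thesis
    using card_le_degree_if_roots[of "monom 1 N + [:-c:]" "{x\<in>A. x ^ N = c}"]
    by (simp add: poly_monom)
qed

lemma card_power_eq_linear_le:
  assumes "N \<ge> 2"
  shows "card {x\<in>A. x ^ N = (b::'a::field) * x} \<le> N"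
proof -
  have "degree [:0, b:] \<le> 1"
    by (simp add: degree_pCons_le)
  hence "degree (monom (1::'a) N + [:0, -b:]) = N"
    using assms by (subst degree_add_eq_left) (auto simp: degree_monom_eq)
  moreover from this have "monom (1::'a) N + [:0, -b:] \<noteq> 0"
    using assms by auto
  ultimately show ?thesis
    using card_le_degree_if_roots[of "monom 1 N + [:0, -b:]" "{x\<in>A. x ^ N = b * x}"]
    by (simp add: poly_monom algebra_simps)
qed

lemma card_eq_sum_card_fibres:
  assumes "finite A" "finite B" "f ` A \<subseteq> B"
  shows "card A = (\<Sum>b\<in>B. card {x\<in>A. f x = b})"
proof -
  have "A = (\<Union>b\<in>B. {x\<in>A. f x = b})"
    using assms(3) by auto
  also have "card \<dots> = (\<Sum>b\<in>B. card {x\<in>A. f x = b})"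
    using assms(1,2) by (intro card_UN_disjoint) auto
  finally show ?thesis .
qed

lemma card_le_card_image_mult:
  assumes "finite A" "\<And>b. card {x\<in>A. f x = b} \<le> t"
  shows "card A \<le> card (f ` A) * t"
proof -
  have "card A = (\<Sum>b\<in>f ` A. card {x\<in>A. f x = b})"
    using assms(1) by (intro card_eq_sum_card_fibres) auto
  also have "\<dots> \<le> card (f ` A) * t"
    using sum_bounded_above[of "f ` A" "\<lambda>b. card {x\<in>A. f x = b}" t] assms(2) by simp
  finally show ?thesis .
qed

section \<open>The subfields \<open>F_{q^2}\<close> and \<open>F_q\<close> of \<open>F_{q^{2n}}\<close>\<close>

locale Fq2n_linearized =
  fixes q n p k :: nat and a :: "nat \<Rightarrow> 'a::{field,finite}"
  assumes prime_p: "prime p" and k_pos: "0 < k" and q_eq: "q = p ^ k"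
    and n_pos: "0 < n" and card_UNIV: "card (UNIV :: 'a set) = q ^ (2*n)"
begin

lemma q_ge_2: "q \<ge> 2"
proof -
  have "p ^ 1 \<le> p ^ k"
    using prime_gt_0_nat[OF prime_p] k_pos by (intro power_increasing) auto
  thus ?thesis
    using prime_ge_2_nat[OF prime_p] q_eq by simp
qed

lemma q_pos [simp]: "0 < q" and q_neq_0 [simp]: "q \<noteq> 0"
  using q_ge_2 by simp_all

lemma q_square_gt_1: "q^2 > 1"
  using q_ge_2 by (intro one_less_power) auto

lemma power_q_square_inject: "(q^2)^d = (q^2)^e \<longleftrightarrow> d = e"
  using q_square_gt_1 by simp

lemma CHAR_eq: "CHAR('a) = p"
proof -
  have "prime CHAR('a)"
    using prime_CHAR_semidom finite_imp_CHAR_pos[OF finite_UNIV] by blast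
  moreover have "CHAR('a) dvd p ^ (k * (2*n))"
    using CHAR_dvd_CARD[where 'a='a] card_UNIV q_eq by (simp add: power_mult)
  ultimately show ?thesis
    using prime_p prime_dvd_power primes_dvd_imp_eq by blast
qed

lemma frob_add: "((x::'a) + y) ^ q ^ j = x ^ q ^ j + y ^ q ^ j"
  using freshmans_dream'[where 'a='a, of "q^j" "k*j"] prime_p CHAR_eq q_eq by (simp add: power_mult)

lemma frob_sum: "(sum (f :: 'b \<Rightarrow> 'a) A) ^ q ^ j = (\<Sum>i\<in>A. f i ^ q ^ j)"
  using freshmans_dream_sum'[where 'a='a, of "q^j" "k*j"] prime_p CHAR_eq q_eq by (simp add: power_mult)

lemma frob_minus: "(- (x::'a)) ^ q ^ j = - (x ^ q ^ j)"
  using frob_add[of x "-x" j] by (simp add: eq_neg_iff_add_eq_0 add.commute zero_power)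

lemma frob_diff: "((x::'a) - y) ^ q ^ j = x ^ q ^ j - y ^ q ^ j"
  using frob_add[of x "-y" j] frob_minus[of y j] by simp

lemmas frob_add_q = frob_add[where j = 1, unfolded power_one_right]
  and frob_sum_q = frob_sum[where j = 1, unfolded power_one_right]

lemma frob_inj: "inj (\<lambda>x::'a. x ^ q)"
proof (rule injI)
  fix x y :: 'a
  assume "x ^ q = y ^ q"
  hence "(x - y) ^ q = 0"
    using frob_diff[of x y 1] by simp
  thus "x = y"
    by simp
qed

lemma power_card_UNIV: "(x::'a) ^ card (UNIV :: 'a set) = x"
proof (cases "x = 0")
  case False
  let ?U = "UNIV - {0::'a}"
  have "x ^ card ?U * \<Prod>?U = (\<Prod>y\<in>?U. x * y)"
    by (simp only: prod.distrib prod_constant)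
  also have "\<dots> = 1 * \<Prod>?U"
    using False by (simp, intro prod.reindex_bij_witness[of _ "\<lambda>y. y / x" "\<lambda>y. x * y"]) auto
  finally have "x ^ card ?U = 1"
    by (subst (asm) mult_cancel_right) auto
  moreover have "card (UNIV :: 'a set) = Suc (card ?U)"
    using finite_UNIV_card_ge_0[where 'a='a] by (simp add: card_Diff_singleton)
  ultimately show ?thesis
    by (simp only: power_Suc mult_1_right)
qed (use finite_UNIV_card_ge_0[where 'a='a] in simp)

lemma power_card_UNIV_minus_1:
  assumes "(x::'a) \<noteq> 0"
  shows "x ^ (q^(2*n) - 1) = 1"
proof -
  have "Suc (q^(2*n) - 1) = q^(2*n)"
    by simp
  hence "x * x ^ (q^(2*n) - 1) = x ^ q^(2*n)"
    by (metis power_Suc)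
  also have "\<dots> = x * 1"
    using power_card_UNIV card_UNIV by simp
  finally show ?thesis
    using assms by simp
qed

lemma power_Q_power_n: "(x::'a) ^ (q^2) ^ n = x"
  using power_card_UNIV card_UNIV by (simp add: power_mult)

lemma power_Q_power_add_n: "(x::'a) ^ (q^2) ^ (n + j) = x ^ (q^2) ^ j"
  by (simp add: power_add power_mult power_Q_power_n)

abbreviation Fq2 :: "'a set" where "Fq2 \<equiv> subfield_q2 q"

definition Fq :: "'a set" where "Fq = {x. x ^ q = x}"

lemma Fq2_iff: "x \<in> Fq2 \<longleftrightarrow> x ^ (q^2) = x"
  by (simp add: subfield_q2_def)

lemma Fq2_0 [simp]: "0 \<in> Fq2" and Fq2_1 [simp]: "1 \<in> Fq2"
  by (simp_all add: Fq2_iff)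

lemma Fq2_add: "x \<in> Fq2 \<Longrightarrow> y \<in> Fq2 \<Longrightarrow> x + y \<in> Fq2"
  using frob_add[of x y 2] by (simp add: Fq2_iff)

lemma Fq2_diff: "x \<in> Fq2 \<Longrightarrow> y \<in> Fq2 \<Longrightarrow> x - y \<in> Fq2"
  using frob_diff[of x y 2] by (simp add: Fq2_iff)

lemma Fq2_mult: "x \<in> Fq2 \<Longrightarrow> y \<in> Fq2 \<Longrightarrow> x * y \<in> Fq2"
  by (simp add: Fq2_iff power_mult_distrib)

lemma Fq2_power: "x \<in> Fq2 \<Longrightarrow> x ^ j \<in> Fq2"
  unfolding Fq2_iff by (simp only: mult.commute[of j] flip: power_mult) (simp only: power_mult)

lemma Fq2_divide: "x \<in> Fq2 \<Longrightarrow> y \<in> Fq2 \<Longrightarrow> x / y \<in> Fq2"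
  by (simp add: Fq2_iff power_divide)

lemma Fq2_power_Q_power: "x \<in> Fq2 \<Longrightarrow> x ^ (q^2)^j = x"
  by (induction j) (simp_all add: Fq2_iff power_mult)

lemma Fq2_conj_conj: "x \<in> Fq2 \<Longrightarrow> (x ^ q) ^ q = x"
  unfolding Fq2_iff by (simp add: power2_eq_square power_mult)

lemma Fq_0 [simp]: "0 \<in> Fq" and Fq_1 [simp]: "1 \<in> Fq"
  by (simp_all add: Fq_def)

lemma Fq_minus: "x \<in> Fq \<Longrightarrow> -x \<in> Fq"
  using frob_minus[of x 1] by (simp add: Fq_def)

lemma Fq_mult: "x \<in> Fq \<Longrightarrow> y \<in> Fq \<Longrightarrow> x * y \<in> Fq"
  by (simp add: Fq_def power_mult_distrib)

lemma Fq_divide: "x \<in> Fq \<Longrightarrow> y \<in> Fq \<Longrightarrow> x / y \<in> Fq"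
  by (simp add: Fq_def power_divide)

lemma card_Fq2: "card Fq2 = q^2"
proof -
  define M where "M = (\<Sum>j<n. (q^2)^j)"
  define r where "r = q^2 - 1"
  have "int (r * M) = (int q^2 - 1) * (\<Sum>j<n. (int q^2)^j)"
    using q_square_gt_1 by (simp add: r_def M_def)
  also have "\<dots> = int q ^ (2*n) - 1"
    by (simp add: power_mult flip: power_diff_1_eq)
  also have "\<dots> = int (q^(2*n) - 1)"
    using q_pos by (simp add: Suc_le_eq)
  finally have geom: "r * M = q^(2*n) - 1"
    by (simp only: of_nat_eq_iff)
  have "M > 0"
    unfolding M_def using n_pos by (intro sum_pos2[of _ 0]) auto
  \<comment> \<open>\<open>x \<mapsto> x^M\<close> is the norm onto \<open>Fq2\<close>; its fibres are root sets of a degree \<open>M\<close> binomial.\<close>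
  have "x ^ M \<in> Fq2 - {0}" if "x \<noteq> 0" for x :: 'a
  proof -
    have "q^2 = Suc r"
      using q_square_gt_1 by (simp add: r_def)
    hence "(x ^ M) ^ (q^2) = x ^ M * x ^ (r * M)"
      by (simp add: mult.commute power_mult)
    thus ?thesis
      using power_card_UNIV_minus_1[OF that] geom that by (simp add: Fq2_iff)
  qed
  hence "card ((\<lambda>x. x ^ M) ` (UNIV - {0::'a})) \<le> card (Fq2 - {0})"
    by (intro card_mono) auto
  moreover have "card (UNIV - {0::'a}) \<le> card ((\<lambda>x. x ^ M) ` (UNIV - {0::'a})) * M"
    by (rule card_le_card_image_mult, simp, rule card_power_eq_const_le, fact)
  ultimately have "card (UNIV - {0::'a}) \<le> card (Fq2 - {0}) * M"
    by (meson le_trans mult_le_mono1)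
  hence "r * M \<le> card (Fq2 - {0}) * M"
    using geom card_UNIV by (simp add: card_Diff_singleton)
  hence "q^2 \<le> card Fq2"
    using \<open>M > 0\<close> q_square_gt_1 by (simp add: r_def card_Diff_singleton)
  moreover have "card Fq2 \<le> q^2"
    using card_power_eq_linear_le[where N = "q^2" and A = UNIV and b = "1::'a"] q_square_gt_1 by (simp add: subfield_q2_def)
  ultimately show ?thesis
    by simp
qed

lemma card_Fq2_nonzero: "card (Fq2 - {0}) = q^2 - 1"
  by (simp add: card_Diff_singleton card_Fq2)

lemma Fq2_nonzero_power:
  assumes "x \<in> Fq2" "x \<noteq> 0"
  shows "x ^ (q^2 - 1) = 1"
proof -
  have "Suc (q^2 - 1) = q^2"
    using q_square_gt_1 by simp
  hence "x * x ^ (q^2 - 1) = x ^ (q^2)"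
    by (metis power_Suc)
  also have "\<dots> = x * 1"
    using assms(1) by (simp add: Fq2_iff)
  finally show ?thesis
    using assms(2) by simp
qed

lemma q_square_minus_1: "q^2 - 1 = (q - 1) * (q + 1)"
  by (simp add: power2_eq_square algebra_simps diff_mult_distrib)

lemma Fq2_norm_in_Fq:
  assumes "x \<in> Fq2"
  shows "x ^ (q+1) \<in> Fq"
proof -
  have "(x ^ (q+1)) ^ q = (x ^ q) ^ q * x ^ q"
    by (simp add: power_add power_mult_distrib)
  thus ?thesis
    using Fq2_conj_conj[OF assms] by (simp add: Fq_def power_add mult.commute)
qed

lemma card_Fq_le: "card Fq \<le> q"
  using card_power_eq_linear_le[OF q_ge_2, where A = UNIV and b = "1::'a"] by (simp add: Fq_def)

lemma card_norm_image_ge: "q - 1 \<le> card ((\<lambda>x. x ^ (q+1)) ` (Fq2 - {0}))"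
proof -
  have "(q - 1) * (q + 1) \<le> card ((\<lambda>x. x ^ (q+1)) ` (Fq2 - {0})) * (q + 1)"
    using card_power_eq_const_le[where N = "q+1" and A = "Fq2 - {0}"]
    by (simp only: flip: q_square_minus_1 card_Fq2_nonzero, intro card_le_card_image_mult) auto
  thus ?thesis
    by (rule mult_right_le_imp_le) simp
qed

lemma card_Fq: "card Fq = q"
  and norm_image: "(\<lambda>x. x ^ (q+1)) ` (Fq2 - {0}) = Fq - {0}"
proof -
  have sub: "(\<lambda>x. x ^ (q+1)) ` (Fq2 - {0}) \<subseteq> Fq - {0}"
    using Fq2_norm_in_Fq by auto
  hence "card ((\<lambda>x. x ^ (q+1)) ` (Fq2 - {0})) \<le> card Fq - 1"
    using card_mono[OF _ sub] by (simp add: card_Diff_singleton)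
  thus "card Fq = q"
    using card_norm_image_ge card_Fq_le q_ge_2 by linarith
  thus "(\<lambda>x. x ^ (q+1)) ` (Fq2 - {0}) = Fq - {0}"
    using card_norm_image_ge card_mono[OF _ sub]
    by (intro card_subset_eq[OF _ sub]) (simp_all add: card_Diff_singleton)
qed

lemma exists_Fq2_not_Fq: "\<exists>c\<in>Fq2. c ^ q \<noteq> c"
proof (rule ccontr)
  assume "\<not> ?thesis"
  hence "Fq2 \<subseteq> Fq"
    by (auto simp: Fq_def)
  hence "q^2 \<le> q"
    using card_mono[of Fq Fq2] card_Fq2 card_Fq by simp
  thus False
    using q_ge_2 by (simp add: power2_eq_square)
qed

lemma U_grp_eq_image: "U_grp q = (\<lambda>x. x ^ (q - 1)) ` (Fq2 - {0})"
proof (rule sym, rule card_seteq)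
  have "(x ^ (q - 1)) ^ (q + 1) = 1" if "x \<in> Fq2 - {0}" for x
  proof -
    have "(x ^ (q - 1)) ^ (q + 1) = x ^ (q^2 - 1)"
      by (simp only: q_square_minus_1 power_mult)
    also have "\<dots> = 1"
      using that by (intro Fq2_nonzero_power) auto
    finally show ?thesis .
  qed
  thus sub: "(\<lambda>x. x ^ (q - 1)) ` (Fq2 - {0}) \<subseteq> U_grp q"
    by (auto simp: U_grp_def Fq2_power)
  have "(q + 1) * (q - 1) \<le> card ((\<lambda>x. x ^ (q - 1)) ` (Fq2 - {0})) * (q - 1)"
    using card_power_eq_const_le[where N = "q - 1" and A = "Fq2 - {0}"] q_ge_2
    by (simp only: mult.commute[of "q+1"] flip: q_square_minus_1 card_Fq2_nonzero,
        intro card_le_card_image_mult) auto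
  hence "q + 1 \<le> card ((\<lambda>x. x ^ (q - 1)) ` (Fq2 - {0}))"
    by (rule mult_right_le_imp_le) (use q_ge_2 in simp)
  moreover have "card (U_grp q :: 'a set) \<le> card {x \<in> UNIV. x ^ (q+1) = (1::'a)}"
    by (intro card_mono) (auto simp: U_grp_def)
  moreover have "\<dots> \<le> q + 1"
    by (rule card_power_eq_const_le) simp
  ultimately show "card (U_grp q :: 'a set) \<le> card ((\<lambda>x. x ^ (q - 1)) ` (Fq2 - {0}))"
    by linarith
qed simp

lemma Fq2_trace_in_Fq: "s \<in> Fq2 \<Longrightarrow> s ^ q + s \<in> Fq"
  using frob_add_q[of "s ^ q" s] Fq2_conj_conj[of s] by (simp add: Fq_def add.commute)

lemma card_Fq2_trace_fibre_le:
  "card {x \<in> Fq2. x ^ q + x = b} \<le> card {t \<in> Fq2. t ^ q + t = 0}"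
proof (cases "\<exists>x0\<in>Fq2. x0 ^ q + x0 = b")
  case True
  then obtain x0 where x0: "x0 \<in> Fq2" "x0 ^ q + x0 = b"
    by blast
  have sub: "{x \<in> Fq2. x ^ q + x = b} \<subseteq> (+) x0 ` {t \<in> Fq2. t ^ q + t = 0}"
  proof
    fix x
    assume x: "x \<in> {x \<in> Fq2. x ^ q + x = b}"
    have "(x - x0) ^ q + (x - x0) = (x ^ q + x) - (x0 ^ q + x0)"
      using frob_diff[of x x0 1] by (simp add: algebra_simps)
    also have "\<dots> = 0"
      using x x0(2) by (simp only: mem_Collect_eq diff_self)
    finally have "x - x0 \<in> {t \<in> Fq2. t ^ q + t = 0}"
      using x x0 Fq2_diff by simp
    thus "x \<in> (+) x0 ` {t \<in> Fq2. t ^ q + t = 0}"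
      by (intro image_eqI[of _ _ "x - x0"]) auto
  qed
  show ?thesis
    using card_mono[OF _ sub] card_image_le[of "{t \<in> Fq2. t ^ q + t = 0}" "(+) x0"] by simp
next
  case False
  hence "{x \<in> Fq2. x ^ q + x = b} = {}"
    by blast
  thus ?thesis
    by (simp only: card.empty zero_le)
qed

lemma card_Fq2_trace_zero: "card {t \<in> Fq2. t ^ q + t = 0} = q"
proof -
  let ?T = "\<lambda>t::'a. t ^ q + t"
  let ?Z = "{t \<in> Fq2. t ^ q + t = 0}"
  have "?Z = {x \<in> Fq2. x ^ q = (-1) * x}"
    by (auto simp: eq_neg_iff_add_eq_0)
  hence "card ?Z \<le> q"
    by (simp only: card_power_eq_linear_le[OF q_ge_2])
  have "?T ` Fq2 \<subseteq> Fq"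
    using Fq2_trace_in_Fq by auto
  hence img: "card (?T ` Fq2) \<le> q"
    using card_mono[of Fq "?T ` Fq2"] card_Fq by simp
  have "card Fq2 \<le> card (?T ` Fq2) * card ?Z"
    using card_Fq2_trace_fibre_le by (intro card_le_card_image_mult) auto
  hence "q * q \<le> card (?T ` Fq2) * card ?Z"
    using card_Fq2 by (simp add: power2_eq_square)
  also have "\<dots> \<le> q * card ?Z"
    using img by (rule mult_le_mono1)
  finally have "q * q \<le> q * card ?Z" .
  thus ?thesis
    using \<open>card ?Z \<le> q\<close> by simp
qed

lemma card_Fq2_nonzero_trace_zero:
  assumes "s \<in> Fq2"
  shows "card {t \<in> Fq2 - {0}. (t * s) ^ q + t * s = 0} = (if s = 0 then q^2 - 1 else q - 1)"
proof (cases "s = 0")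
  case True
  hence "{t \<in> Fq2 - {0}. (t * s) ^ q + t * s = 0} = Fq2 - {0}"
    by (auto simp: zero_power)
  thus ?thesis
    using True card_Fq2_nonzero by simp
next
  case False
  let ?S = "{t \<in> Fq2 - {0}. (t * s) ^ q + t * s = 0}"
  have inj: "inj_on (\<lambda>t. t * s) ?S"
    using False by (intro inj_onI) simp
  have "(\<lambda>t. t * s) ` ?S = {t \<in> Fq2. t ^ q + t = 0} - {0}"
  proof
    show "(\<lambda>t. t * s) ` ?S \<subseteq> {t \<in> Fq2. t ^ q + t = 0} - {0}"
      using False assms Fq2_mult by auto
    show "{t \<in> Fq2. t ^ q + t = 0} - {0} \<subseteq> (\<lambda>t. t * s) ` ?S"
    proof
      fix t
      assume "t \<in> {t \<in> Fq2. t ^ q + t = 0} - {0}"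
      thus "t \<in> (\<lambda>t. t * s) ` ?S"
        using False assms Fq2_divide by (intro image_eqI[of _ _ "t / s"]) auto
    qed
  qed
  hence "card ?S = card ({t \<in> Fq2. t ^ q + t = 0} - {0})"
    using card_image[OF inj] by simp
  thus ?thesis
    using False card_Fq2_trace_zero q_pos by (simp add: card_Diff_singleton zero_power)
qed

section \<open>Hermitian forms over \<open>F_{q^2}\<close>\<close>

definition Fq2_subspace :: "'a set \<Rightarrow> bool" where
  "Fq2_subspace W \<longleftrightarrow> 0 \<in> W \<and> (\<forall>x\<in>W. \<forall>y\<in>W. x + y \<in> W) \<and> (\<forall>c\<in>Fq2. \<forall>x\<in>W. c * x \<in> W)"

lemma Fq2_subspaceD:
  assumes "Fq2_subspace W"
  shows Fq2_subspace_0: "0 \<in> W"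
    and Fq2_subspace_add: "x \<in> W \<Longrightarrow> y \<in> W \<Longrightarrow> x + y \<in> W"
    and Fq2_subspace_smult: "c \<in> Fq2 \<Longrightarrow> x \<in> W \<Longrightarrow> c * x \<in> W"
    and Fq2_subspace_diff: "x \<in> W \<Longrightarrow> y \<in> W \<Longrightarrow> x - y \<in> W"
proof -
  show "0 \<in> W" "x \<in> W \<Longrightarrow> y \<in> W \<Longrightarrow> x + y \<in> W" "c \<in> Fq2 \<Longrightarrow> x \<in> W \<Longrightarrow> c * x \<in> W"
    using assms by (simp_all add: Fq2_subspace_def)
  have "-1 \<in> Fq2"
    using Fq2_diff[OF Fq2_0 Fq2_1] by simp
  hence "x + (-1) * y \<in> W" if "x \<in> W" "y \<in> W"
    using assms that unfolding Fq2_subspace_def by blast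
  thus "x \<in> W \<Longrightarrow> y \<in> W \<Longrightarrow> x - y \<in> W"
    by simp
qed

lemma Fq2_subspace_UNIV: "Fq2_subspace UNIV"
  by (simp add: Fq2_subspace_def)

definition span_insert :: "'a set \<Rightarrow> 'a \<Rightarrow> 'a set" where
  "span_insert S w = (\<lambda>(c, s). c * w + s) ` (Fq2 \<times> S)"

lemma card_span_insert:
  assumes S: "Fq2_subspace S" and w: "w \<notin> S"
  shows "card (span_insert S w) = q^2 * card S"
proof -
  have "inj_on (\<lambda>(c, s). c * w + s) (Fq2 \<times> S)"
  proof (rule inj_onI, clarify)
    fix c s c' s'
    assume h: "c \<in> Fq2" "s \<in> S" "c' \<in> Fq2" "s' \<in> S" "c * w + s = c' * w + s'"
    show "c = c' \<and> s = s'"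
    proof (cases "c = c'")
      case False
      have "w = (1 / (c - c')) * (s' - s)"
        using h(5) False by (simp add: field_simps)
      moreover have "(1 / (c - c')) * (s' - s) \<in> S"
        using h by (intro Fq2_subspace_smult[OF S] Fq2_divide Fq2_diff Fq2_subspace_diff[OF S]) simp_all
      ultimately show ?thesis
        using w by simp
    qed (use h in simp)
  qed
  thus ?thesis
    unfolding span_insert_def by (simp add: card_image card_cartesian_product card_Fq2)
qed

lemma Fq2_subspace_span_insert:
  assumes S: "Fq2_subspace S"
  shows "Fq2_subspace (span_insert S w)"
  unfolding Fq2_subspace_def
proof (intro conjI ballI)
  show "0 \<in> span_insert S w"
    unfolding span_insert_def using Fq2_subspace_0[OF S] by (auto intro!: image_eqI[of _ _ "(0, 0)"])
next
  fix x y
  assume "x \<in> span_insert S w" "y \<in> span_insert S w"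
  then obtain c s c' s' where h: "c \<in> Fq2" "s \<in> S" "c' \<in> Fq2" "s' \<in> S"
    "x = c * w + s" "y = c' * w + s'"
    unfolding span_insert_def by auto
  have "x + y = (c + c') * w + (s + s')"
    using h by (simp add: algebra_simps)
  thus "x + y \<in> span_insert S w"
    unfolding span_insert_def using h Fq2_add Fq2_subspace_add[OF S]
    by (auto intro!: image_eqI[of _ _ "(c + c', s + s')"])
next
  fix b x
  assume "b \<in> Fq2" "x \<in> span_insert S w"
  then obtain c s where h: "c \<in> Fq2" "s \<in> S" "x = c * w + s"
    unfolding span_insert_def by auto
  have "b * x = (b * c) * w + b * s"
    using h by (simp add: algebra_simps)
  thus "b * x \<in> span_insert S w"
    unfolding span_insert_def using h \<open>b \<in> Fq2\<close> Fq2_mult Fq2_subspace_smult[OF S]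
    by (auto intro!: image_eqI[of _ _ "(b * c, b * s)"])
qed

lemma span_insert_subset:
  assumes W: "Fq2_subspace W" and "S \<subseteq> W" "w \<in> W"
  shows "span_insert S w \<subseteq> W"
proof
  fix x
  assume "x \<in> span_insert S w"
  then obtain c s where "c \<in> Fq2" "s \<in> S" "x = c * w + s"
    unfolding span_insert_def by auto
  thus "x \<in> W"
    using assms by (auto intro!: Fq2_subspace_add[OF W] Fq2_subspace_smult[OF W])
qed

lemma card_Fq2_subspace_over:
  "Fq2_subspace W \<Longrightarrow> Fq2_subspace S \<Longrightarrow> S \<subseteq> W \<Longrightarrow> \<exists>d. card W = card S * (q^2)^d"
proof (induction "card W - card S" arbitrary: S rule: less_induct)
  case less
  show ?case
  proof (cases "S = W")
    case False
    then obtain w where w: "w \<in> W" "w \<notin> S"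
      using less.prems by auto
    let ?S' = "span_insert S w"
    have card_S': "card ?S' = q^2 * card S"
      using card_span_insert[OF less.prems(2) w(2)] .
    have "?S' \<subseteq> W"
      by (rule span_insert_subset[OF less.prems(1,3) w(1)])
    have "card S > 0"
      using Fq2_subspace_0[OF less.prems(2)] by (auto simp: card_gt_0_iff)
    hence "card S < card ?S'"
      using card_S' mult_less_mono1[OF q_square_gt_1] by simp
    hence "card W - card ?S' < card W - card S"
      using \<open>?S' \<subseteq> W\<close> card_mono[of W ?S'] by (intro diff_less_mono2) simp_all
    then obtain d where "card W = card ?S' * (q^2)^d"
      using less.hyps Fq2_subspace_span_insert[OF less.prems(2)] \<open>?S' \<subseteq> W\<close> less.prems(1)
      by blast
    hence "card W = card S * (q^2)^(Suc d)"
      using card_S' by simp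
    thus ?thesis
      by blast
  qed (intro exI[of _ 0], simp)
qed

lemma dim_q2_eq: "card S = (q^2)^d \<Longrightarrow> dim_q2 q S = d"
  unfolding dim_q2_def by (rule the_equality) (auto simp: power_q_square_inject)

lemma card_Fq2_subspace: "Fq2_subspace W \<Longrightarrow> card W = (q^2) ^ dim_q2 q W"
  using card_Fq2_subspace_over[of W "{0}"] dim_q2_eq
  by (fastforce simp: Fq2_subspace_def)

definition hermitian :: "('a \<Rightarrow> 'a \<Rightarrow> 'a) \<Rightarrow> bool" where
  "hermitian H \<longleftrightarrow> (\<forall>u w. H u w \<in> Fq2) \<and> (\<forall>u u' w. H (u + u') w = H u w + H u' w)
     \<and> (\<forall>c\<in>Fq2. \<forall>u w. H (c * u) w = c * H u w) \<and> (\<forall>u w. H w u = H u w ^ q)"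

definition radical :: "('a \<Rightarrow> 'a \<Rightarrow> 'a) \<Rightarrow> 'a set \<Rightarrow> 'a set" where
  "radical H W = {w \<in> W. \<forall>x\<in>W. H x w = 0}"

definition orth :: "('a \<Rightarrow> 'a \<Rightarrow> 'a) \<Rightarrow> 'a set \<Rightarrow> 'a \<Rightarrow> 'a set" where
  "orth H W u = {w \<in> W. H w u = 0}"

text \<open>The deviation of \<open>q * #{w \<in> W. H w w = b}\<close> from \<open>q^(2d)\<close>, for a Hermitian form on a space \<open>W\<close>
  of dimension \<open>d\<close> whose radical has dimension \<open>e\<close> (see \<open>card_norm_value\<close>).\<close>

definition norm_defect :: "bool \<Rightarrow> nat \<Rightarrow> nat \<Rightarrow> int" where
  "norm_defect isotropic d e = (-1) ^ (d - e) * int q ^ (d + e) * (if isotropic then int q - 1 else -1)"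

context
  fixes H :: "'a \<Rightarrow> 'a \<Rightarrow> 'a"
  assumes H: "hermitian H"
begin

lemma herm_Fq2: "H u w \<in> Fq2"
  and herm_add_left: "H (u + u') w = H u w + H u' w"
  and herm_smult_left: "c \<in> Fq2 \<Longrightarrow> H (c * u) w = c * H u w"
  and herm_conj: "H w u = H u w ^ q"
  using H unfolding hermitian_def by blast+

lemma herm_add_right: "H u (w + w') = H u w + H u w'"
proof -
  have "H u (w + w') = (H w u + H w' u) ^ q"
    by (simp only: herm_conj[where u = "w + w'" and w = u] herm_add_left)
  also have "\<dots> = H u w + H u w'"
    by (simp only: frob_add_q herm_conj[where u = w and w = u] herm_conj[where u = w' and w = u])
  finally show ?thesis .
qed

lemma herm_smult_right:
  assumes "c \<in> Fq2"
  shows "H u (c * w) = c ^ q * H u w"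
proof -
  have "H u (c * w) = (c * H w u) ^ q"
    by (simp only: herm_conj[where u = "c * w" and w = u] herm_smult_left[OF assms])
  also have "\<dots> = c ^ q * H u w"
    by (simp only: power_mult_distrib herm_conj[where u = w and w = u])
  finally show ?thesis .
qed

lemma herm_zero_left [simp]: "H 0 w = 0"
  using herm_add_left[of 0 0 w] by (simp only: add_0 add_cancel_right_right)

lemma herm_diff_left: "H (u - u') w = H u w - H u' w"
  using herm_add_left[of "u - u'" u' w] by (simp add: algebra_simps)

lemma herm_norm_in_Fq: "H u u \<in> Fq"
  using herm_conj[of u u] by (simp add: Fq_def)

lemma herm_expand: "H (u + w) (u + w) = H u u + H u w + H w u + H w w"
  by (simp only: herm_add_left herm_add_right add_ac)

text \<open>Over \<open>Fq2\<close> a Hermitian form vanishing on the diagonal vanishes identically: polarise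
  with \<open>u\<close> and with \<open>c u\<close> for some \<open>c \<notin> Fq\<close>.\<close>

lemma exists_anisotropic:
  assumes W: "Fq2_subspace W" and "radical H W \<noteq> W"
  shows "\<exists>u\<in>W. H u u \<noteq> 0"
proof (rule ccontr)
  assume "\<not> ?thesis"
  hence iso: "\<And>u. u \<in> W \<Longrightarrow> H u u = 0"
    by blast
  obtain c where c: "c \<in> Fq2" "c ^ q \<noteq> c"
    using exists_Fq2_not_Fq by blast
  have "H x w = 0" if x: "x \<in> W" and w: "w \<in> W" for x w
  proof -
    have polarise: "H y w + H y w ^ q = 0" if "y \<in> W" for y
      using herm_expand[of y w] iso[OF Fq2_subspace_add[OF W that w]] iso[OF that] iso[OF w]
        herm_conj[where u = y and w = w] by simp
    have "H x w ^ q = - H x w"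
      using polarise[OF x] by (simp add: add_eq_0_iff)
    moreover have "c * H x w + (c * H x w) ^ q = 0"
      using polarise[OF Fq2_subspace_smult[OF W c(1) x]] by (simp only: herm_smult_left[OF c(1)])
    ultimately have "(c - c ^ q) * H x w = 0"
      by (simp add: algebra_simps)
    thus ?thesis
      using c(2) by simp
  qed
  hence "radical H W = W"
    by (auto simp: radical_def)
  with assms(2) show False
    by simp
qed

lemma card_norm_eq:
  assumes W: "Fq2_subspace W" and y: "y \<in> Fq - {0}" and z: "z \<in> Fq - {0}"
  shows "card {w \<in> W. H w w = y} = card {w \<in> W. H w w = z}"
proof -
  have le: "card {w \<in> W. H w w = y} \<le> card {w \<in> W. H w w = z}"
    if y: "y \<in> Fq - {0}" and z: "z \<in> Fq - {0}" for y z
  proof -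
    have "z / y \<in> Fq - {0}"
      using y z Fq_divide by auto
    hence "z / y \<in> (\<lambda>x. x ^ (q+1)) ` (Fq2 - {0})"
      by (simp only: norm_image)
    then obtain l where "z / y = l ^ (q+1)" "l \<in> Fq2 - {0}"
      by (rule imageE)
    hence l: "l \<in> Fq2" "l \<noteq> 0" "l ^ (q+1) = z / y"
      by simp_all
    have sub: "(*) l ` {w \<in> W. H w w = y} \<subseteq> {w \<in> W. H w w = z}"
    proof (rule image_subsetI)
      fix w
      assume w: "w \<in> {w \<in> W. H w w = y}"
      have "H (l * w) (l * w) = l ^ q * (l * H w w)"
        by (simp only: herm_smult_left[OF l(1)] herm_smult_right[OF l(1)])
      also have "\<dots> = l ^ (q+1) * y"
        using w by (simp add: mult_ac)
      finally have "H (l * w) (l * w) = l ^ (q+1) * y" .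
      thus "l * w \<in> {w \<in> W. H w w = z}"
        using l y w Fq2_subspace_smult[OF W l(1)] by auto
    qed
    thus ?thesis
      using l(2) by (intro card_inj_on_le[OF _ sub]) (simp_all add: inj_on_def)
  qed
  show ?thesis
    using le[OF y z] le[OF z y] by (rule order_antisym)
qed

lemma card_eq_isotropic_plus_norm_1:
  assumes W: "Fq2_subspace W"
  shows "int (card W) = int (card {w \<in> W. H w w = 0}) + (int q - 1) * int (card {w \<in> W. H w w = 1})"
proof -
  have "card W = (\<Sum>b\<in>Fq. card {w \<in> W. H w w = b})"
    using herm_norm_in_Fq by (intro card_eq_sum_card_fibres) auto
  also have "\<dots> = card {w \<in> W. H w w = 0} + (\<Sum>b\<in>Fq - {0}. card {w \<in> W. H w w = b})"
    by (subst sum.remove[OF _ Fq_0]) auto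
  also have "(\<Sum>b\<in>Fq - {0}. card {w \<in> W. H w w = b}) = (\<Sum>b\<in>Fq - {0}. card {w \<in> W. H w w = 1})"
    by (rule sum.cong[OF refl], rule card_norm_eq[OF W]) simp_all
  also have "\<dots> = (q - 1) * card {w \<in> W. H w w = 1}"
    using card_Fq by (simp add: card_Diff_singleton)
  finally show ?thesis
    using q_ge_2 by simp
qed

lemma card_isotropic_degenerate:
  assumes "radical H W = W" "card W = (q^2)^d" "card (radical H W) = (q^2)^e"
  shows "e \<le> d \<and> int q * int (card {w \<in> W. H w w = 0}) = int q ^ (2*d) + norm_defect True d e"
proof -
  have "e = d"
    using assms by (simp add: power_q_square_inject)
  have "{w \<in> W. H w w = 0} = W"
    using assms(1) by (auto simp: radical_def)
  hence "int (card {w \<in> W. H w w = 0}) = int q ^ (2*d)"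
    using assms(2) by (simp add: power_mult)
  moreover have "norm_defect True d e = int q ^ (2*d) * (int q - 1)"
    using \<open>e = d\<close> by (simp add: norm_defect_def mult_2)
  moreover have "int q * int q ^ (2*d) = int q ^ (2*d) + int q ^ (2*d) * (int q - 1)"
    by (simp add: algebra_simps)
  ultimately show ?thesis
    using \<open>e = d\<close> by simp
qed

context
  fixes W u0
  assumes W: "Fq2_subspace W" and u0: "u0 \<in> W" "H u0 u0 \<noteq> 0"
begin

lemma orth_subspace: "Fq2_subspace (orth H W u0)"
  using W by (auto simp: Fq2_subspace_def orth_def herm_add_left herm_smult_left)

lemma orth_decompose:
  assumes x: "x \<in> W"
  obtains c w where "c \<in> Fq2" "w \<in> orth H W u0" "x = c * u0 + w"
proof
  define c where "c = H x u0 / H u0 u0"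
  show c: "c \<in> Fq2"
    unfolding c_def by (intro Fq2_divide herm_Fq2)
  have "H (x - c * u0) u0 = H x u0 - c * H u0 u0"
    by (simp only: herm_diff_left herm_smult_left[OF c])
  also have "\<dots> = 0"
    using u0(2) by (simp add: c_def)
  finally show "x - c * u0 \<in> orth H W u0"
    using Fq2_subspace_diff[OF W x Fq2_subspace_smult[OF W c u0(1)]] by (simp add: orth_def)
qed simp

lemma orth_decomposition: "bij_betw (\<lambda>(c, w). c * u0 + w) (Fq2 \<times> orth H W u0) W"
proof (rule bij_betw_imageI)
  show "inj_on (\<lambda>(c, w). c * u0 + w) (Fq2 \<times> orth H W u0)"
  proof (rule inj_onI, clarify)
    fix c w c' w'
    assume h: "c \<in> Fq2" "w \<in> orth H W u0" "c' \<in> Fq2" "w' \<in> orth H W u0" "c * u0 + w = c' * u0 + w'"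
    have "c * H u0 u0 = H (c * u0 + w) u0"
      using h(1,2) by (simp add: herm_add_left herm_smult_left orth_def)
    also have "\<dots> = H (c' * u0 + w') u0"
      by (simp only: h(5))
    also have "\<dots> = c' * H u0 u0"
      using h(3,4) by (simp add: herm_add_left herm_smult_left orth_def)
    finally have "c = c'"
      using u0(2) by simp
    thus "c = c' \<and> w = w'"
      using h(5) by simp
  qed
  show "(\<lambda>(c, w). c * u0 + w) ` (Fq2 \<times> orth H W u0) = W"
    using Fq2_subspace_add[OF W] Fq2_subspace_smult[OF W _ u0(1)]
    by (auto simp: orth_def elim!: orth_decompose)
qed

lemma card_orth: "card W = q^2 * card (orth H W u0)"
  using bij_betw_same_card[OF orth_decomposition] by (simp add: card_cartesian_product card_Fq2)

lemma radical_orth: "radical H (orth H W u0) = radical H W"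
proof
  show "radical H (orth H W u0) \<subseteq> radical H W"
  proof
    fix w
    assume w: "w \<in> radical H (orth H W u0)"
    hence "H u0 w = 0"
      using herm_conj[where u = w and w = u0] by (simp add: radical_def orth_def)
    have "H x w = 0" if "x \<in> W" for x
    proof (rule orth_decompose[OF that])
      fix c w'
      assume "c \<in> Fq2" "w' \<in> orth H W u0" "x = c * u0 + w'"
      thus ?thesis
        using w \<open>H u0 w = 0\<close> by (simp add: herm_add_left herm_smult_left radical_def)
    qed
    thus "w \<in> radical H W"
      using w by (simp add: radical_def orth_def)
  qed
  show "radical H W \<subseteq> radical H (orth H W u0)"
  proof
    fix w
    assume w: "w \<in> radical H W"
    hence "H w u0 = 0"
      using u0(1) herm_conj[where u = u0 and w = w] by (simp add: radical_def)
    thus "w \<in> radical H (orth H W u0)"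
      using w by (simp add: radical_def orth_def)
  qed
qed

lemma norm_orth_decomposition:
  assumes c: "c \<in> Fq2" and w: "w \<in> orth H W u0"
  shows "H (c * u0 + w) (c * u0 + w) = c ^ (q+1) * H u0 u0 + H w w"
proof -
  have "H w u0 = 0" "H u0 w = 0"
    using w herm_conj[where u = w and w = u0] by (simp_all add: orth_def)
  hence "H (c * u0 + w) (c * u0 + w) = c ^ q * (c * H u0 u0) + H w w"
    by (simp only: herm_expand herm_smult_left[OF c] herm_smult_right[OF c] mult_zero_right add_0_right)
  thus ?thesis
    by (simp add: mult_ac)
qed

lemma card_isotropic_eq_sum_orth:
  "card {w \<in> W. H w w = 0} = (\<Sum>c\<in>Fq2. card {w \<in> orth H W u0. H w w = - (c ^ (q+1) * H u0 u0)})"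
proof -
  let ?f = "\<lambda>(c, w). c * u0 + w"
  let ?S = "SIGMA c:Fq2. {w \<in> orth H W u0. H (c * u0 + w) (c * u0 + w) = 0}"
  have inj: "inj_on ?f ?S"
    using bij_betw_imp_inj_on[OF orth_decomposition] by (rule inj_on_subset) auto
  have "?f ` ?S = {w \<in> W. H w w = 0}"
  proof
    show "?f ` ?S \<subseteq> {w \<in> W. H w w = 0}"
      using bij_betw_imp_surj_on[OF orth_decomposition] by auto
    show "{w \<in> W. H w w = 0} \<subseteq> ?f ` ?S"
    proof clarify
      fix x
      assume "x \<in> W" "H x x = 0"
      obtain c w where "c \<in> Fq2" "w \<in> orth H W u0" "x = c * u0 + w"
        using \<open>x \<in> W\<close> by (rule orth_decompose)
      thus "x \<in> ?f ` ?S"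
        using \<open>H x x = 0\<close> by (intro image_eqI[of _ _ "(c, w)"]) simp_all
    qed
  qed
  hence "card {w \<in> W. H w w = 0} = card ?S"
    using card_image[OF inj] by simp
  also have "\<dots> = (\<Sum>c\<in>Fq2. card {w \<in> orth H W u0. H (c * u0 + w) (c * u0 + w) = 0})"
    by (intro card_SigmaI) simp_all
  also have "\<dots> = (\<Sum>c\<in>Fq2. card {w \<in> orth H W u0. H w w = - (c ^ (q+1) * H u0 u0)})"
    by (intro sum.cong refl arg_cong[where f = card] Collect_cong)
       (auto simp: norm_orth_decomposition add_eq_0_iff)
  finally show ?thesis .
qed

lemma card_isotropic_orth:
  "card {w \<in> W. H w w = 0}
     = card {w \<in> orth H W u0. H w w = 0} + (q^2 - 1) * card {w \<in> orth H W u0. H w w = 1}"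
proof -
  have "card {w \<in> W. H w w = 0}
      = card {w \<in> orth H W u0. H w w = 0}
      + (\<Sum>c\<in>Fq2 - {0}. card {w \<in> orth H W u0. H w w = - (c ^ (q+1) * H u0 u0)})"
    unfolding card_isotropic_eq_sum_orth by (subst sum.remove[OF _ Fq2_0]) (simp_all add: zero_power)
  also have "(\<Sum>c\<in>Fq2 - {0}. card {w \<in> orth H W u0. H w w = - (c ^ (q+1) * H u0 u0)})
      = (\<Sum>c\<in>Fq2 - {0}. card {w \<in> orth H W u0. H w w = 1})"
  proof (rule sum.cong[OF refl], rule card_norm_eq[OF orth_subspace])
    fix c
    assume c: "c \<in> Fq2 - {0}"
    have "- (c ^ (q+1) * H u0 u0) \<in> Fq"
      using c by (intro Fq_minus Fq_mult Fq2_norm_in_Fq herm_norm_in_Fq) simp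
    thus "- (c ^ (q+1) * H u0 u0) \<in> Fq - {0}"
      using c u0(2) by simp
  qed simp
  also have "\<dots> = (q^2 - 1) * card {w \<in> orth H W u0. H w w = 1}"
    using card_Fq2_nonzero by simp
  finally show ?thesis .
qed

lemma card_isotropic_orth_step:
  assumes card_W': "card (orth H W u0) = (q^2)^d" and "e \<le> d"
    and IH: "int q * int (card {w \<in> orth H W u0. H w w = 0}) = int q ^ (2*d) + norm_defect True d e"
  shows "int q * int (card {w \<in> W. H w w = 0}) = int q ^ (2 * Suc d) + norm_defect True (Suc d) e"
proof -
  define X Z Z' C where "X = int q" and "Z = int (card {w \<in> W. H w w = 0})"
    and "Z' = int (card {w \<in> orth H W u0. H w w = 0})" and "C = int (card {w \<in> orth H W u0. H w w = 1})"
  define s R P where "s = ((-1)::int) ^ (d - e)" and "R = X ^ (d + e)" and "P = X ^ (2*d)"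
  have Z: "Z = Z' + (X^2 - 1) * C"
    using card_isotropic_orth q_square_gt_1 by (simp add: X_def Z_def Z'_def C_def)
  have C: "(X - 1) * C = P - Z'"
    using card_eq_isotropic_plus_norm_1[OF orth_subspace] card_W'
    by (simp add: X_def Z'_def C_def P_def power_mult)
  have Z': "X * Z' = P + s * (X - 1) * R"
    using IH by (simp add: X_def Z'_def s_def R_def P_def norm_defect_def)
  have "X * Z = X * Z' + X * (X + 1) * ((X - 1) * C)"
    by (simp add: Z algebra_simps power2_eq_square)
  also have "\<dots> = X * (X + 1) * P - X * (X * Z')"
    by (simp only: C) (simp add: algebra_simps)
  also have "\<dots> = X * (X + 1) * P - X * (P + s * (X - 1) * R)"
    by (simp only: Z')
  also have "\<dots> = X^2 * P - s * (X - 1) * (X * R)"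
    by (simp add: algebra_simps power2_eq_square)
  finally have "X * Z = X^2 * P - s * (X - 1) * (X * R)" .
  moreover have "(-1::int) ^ (Suc d - e) = - s"
    using \<open>e \<le> d\<close> by (simp add: s_def Suc_diff_le)
  ultimately show ?thesis
    by (simp add: X_def Z_def R_def P_def norm_defect_def power_add power2_eq_square mult_ac)
qed

end

lemma card_isotropic:
  assumes "Fq2_subspace W" "card W = (q^2)^d" "card (radical H W) = (q^2)^e"
  shows "e \<le> d \<and> int q * int (card {w \<in> W. H w w = 0}) = int q ^ (2*d) + norm_defect True d e"
  using assms
proof (induction d arbitrary: W rule: less_induct)
  case (less d)
  note W = less.prems(1)
  show ?case
  proof (cases "radical H W = W")
    case True
    thus ?thesis
      using card_isotropic_degenerate less.prems(2,3) by blast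
  next
    case False
    then obtain u0 where u0: "u0 \<in> W" "H u0 u0 \<noteq> 0"
      using exists_anisotropic[OF W] by blast
    let ?W' = "orth H W u0"
    have "card ?W' \<noteq> 0"
      using Fq2_subspace_0[OF orth_subspace[OF W u0]] by (auto simp: card_eq_0_iff)
    hence "d \<noteq> 0"
      using card_orth[OF W u0] less.prems(2) q_square_gt_1 by auto
    then obtain d' where d: "d = Suc d'"
      using not0_implies_Suc by blast
    have "card ?W' = (q^2)^d'"
      using card_orth[OF W u0] less.prems(2) q_square_gt_1 d by simp
    moreover have "card (radical H ?W') = (q^2)^e"
      using radical_orth[OF W u0] less.prems(3) by simp
    ultimately have "e \<le> d'" and IH:
      "int q * int (card {w \<in> ?W'. H w w = 0}) = int q ^ (2*d') + norm_defect True d' e"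
      using less.IH[of d' ?W'] orth_subspace[OF W u0] d by auto
    thus ?thesis
      using card_isotropic_orth_step[OF W u0 \<open>card ?W' = (q^2)^d'\<close> \<open>e \<le> d'\<close> IH] d by simp
  qed
qed

lemma card_norm_value:
  assumes "Fq2_subspace W" "card W = (q^2)^d" "card (radical H W) = (q^2)^e" "b \<in> Fq"
  shows "int q * int (card {w \<in> W. H w w = b}) = int q ^ (2*d) + norm_defect (b = 0) d e"
proof (cases "b = 0")
  case False
  define X Z C where "X = int q" and "Z = int (card {w \<in> W. H w w = 0})"
    and "C = int (card {w \<in> W. H w w = 1})"
  define s R P where "s = ((-1)::int) ^ (d - e)" and "R = X ^ (d + e)" and "P = X ^ (2*d)"
  have C: "(X - 1) * C = P - Z"
    using card_eq_isotropic_plus_norm_1[OF assms(1)] assms(2)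
    by (simp add: X_def Z_def C_def P_def power_mult)
  have Z: "X * Z = P + s * (X - 1) * R"
    using card_isotropic[OF assms(1-3)] by (simp add: X_def Z_def s_def R_def P_def norm_defect_def)
  have "(X - 1) * (X * C) = X * P - X * Z"
    by (simp add: mult.left_commute[of "X - 1"] C right_diff_distrib)
  also have "\<dots> = (X - 1) * (P - s * R)"
    by (simp add: Z algebra_simps)
  finally have "X * C = P - s * R"
    using q_ge_2 by (simp add: X_def)
  moreover have "card {w \<in> W. H w w = b} = card {w \<in> W. H w w = 1}"
    using False assms(4) by (intro card_norm_eq[OF assms(1)]) simp_all
  ultimately show ?thesis
    using False by (simp add: X_def C_def s_def R_def P_def norm_defect_def)
qed (use card_isotropic[OF assms(1-3)] in simp)

end

section \<open>The trace form and the linearized polynomial\<close>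

abbreviation trace :: "'a \<Rightarrow> 'a" where "trace \<equiv> Tr q n"

lemma trace_eq: "trace x = (\<Sum>j<n. x ^ (q^2)^j)"
  by (simp add: Tr_def power_mult)

lemma power_Q_power_Suc: "(x::'a) ^ (q^2)^Suc j = (x ^ (q^2)^j) ^ (q^2)"
  by (simp only: power_Suc2 power_mult)

lemma power_Q_power_commute: "((x::'a) ^ (q^2)^j) ^ (q^2) = (x ^ (q^2)) ^ (q^2)^j"
  by (simp only: power_mult[symmetric] mult.commute)

lemma trace_power_Q: "trace (x ^ (q^2)) = trace x"
proof -
  define f where "f j = x ^ (q^2)^j" for j
  have "f 0 + (\<Sum>j<n. f (Suc j)) = (\<Sum>j<n. f j) + f n"
    by (simp only: sum.lessThan_Suc_shift[symmetric] sum.lessThan_Suc)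
  moreover have "f n = f 0"
    by (simp add: f_def power_Q_power_n)
  ultimately have "(\<Sum>j<n. f (Suc j)) = (\<Sum>j<n. f j)"
    by (simp add: add.commute)
  thus ?thesis
    unfolding trace_eq f_def by (simp only: power_Q_power_Suc power_Q_power_commute)
qed

lemma trace_power_Q_power: "trace (x ^ (q^2)^j) = trace x"
  by (induction j) (simp_all only: power_Q_power_Suc trace_power_Q power_0 power_one_right)

lemma trace_in_Fq2: "trace x \<in> Fq2"
proof -
  have "trace x ^ (q^2) = (\<Sum>j<n. (x ^ (q^2)^j) ^ (q^2))"
    unfolding trace_eq using frob_sum[of "\<lambda>j. x ^ (q^2)^j" "{..<n}" 2] by simp
  also have "\<dots> = trace (x ^ (q^2))"
    unfolding trace_eq by (simp only: power_Q_power_commute)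
  finally show ?thesis
    by (simp add: Fq2_iff trace_power_Q)
qed

lemma trace_power_q: "trace (x ^ q) = trace x ^ q"
proof -
  have "trace x ^ q = (\<Sum>j<n. (x ^ (q^2)^j) ^ q)"
    unfolding trace_eq by (rule frob_sum_q)
  also have "\<dots> = trace (x ^ q)"
    unfolding trace_eq by (simp only: power_mult[symmetric] mult.commute)
  finally show ?thesis
    by simp
qed

lemma trace_add: "trace (x + y) = trace x + trace y"
  unfolding Tr_def by (simp add: frob_add sum.distrib)

lemma trace_sum: "trace (\<Sum>i\<in>A. f i) = (\<Sum>i\<in>A. trace (f i))"
  unfolding Tr_def by (simp add: frob_sum) (rule sum.swap)

lemma trace_smult: "c \<in> Fq2 \<Longrightarrow> trace (c * x) = c * trace x"
  unfolding trace_eq by (simp add: power_mult_distrib Fq2_power_Q_power sum_distrib_left)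

lemma trace_zero [simp]: "trace 0 = 0"
  using trace_smult[of 0 0] by simp

lemma trace_not_zero: "\<exists>x. trace x \<noteq> 0"
proof (rule ccontr)
  assume "\<not> ?thesis"
  hence "{x. trace x = 0} = UNIV"
    by simp
  moreover have "(q^2)^j < (q^2)^(n - 1)" if "j \<in> {..<n} - {n - 1}" for j
    using that q_square_gt_1 by (intro power_strict_increasing) auto
  hence "card {x::'a. trace x = 0} \<le> (q^2)^(n - 1)"
    using card_roots_monomial_sum_le[of "{..<n}" "n - 1" "\<lambda>_. 1::'a" "\<lambda>j. (q^2)^j"] n_pos
    by (simp add: trace_eq)
  moreover have "(q^2)^(n - 1) < (q^2)^n"
    using n_pos q_square_gt_1 by (intro power_strict_increasing) auto
  ultimately show False
    using card_UNIV by (simp add: power_mult)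
qed

lemma trace_nondegenerate:
  assumes "\<And>u. trace (u * z) = 0"
  shows "z = 0"
proof (rule ccontr)
  assume "z \<noteq> 0"
  obtain x where "trace x \<noteq> 0"
    using trace_not_zero by blast
  moreover have "trace (x / z * z) = 0"
    by (rule assms)
  ultimately show False
    using \<open>z \<noteq> 0\<close> by simp
qed

abbreviation L :: "'a \<Rightarrow> 'a" where "L \<equiv> linpoly q n a"
abbreviation L_star :: "'a \<Rightarrow> 'a" where "L_star \<equiv> linpoly_star q n a"

lemma L_add: "L (x + y) = L x + L y"
  unfolding linpoly_def by (simp add: frob_add sum.distrib algebra_simps)

lemma L_star_add: "L_star (x + y) = L_star x + L_star y"
  unfolding linpoly_star_def by (simp add: frob_add sum.distrib algebra_simps)

lemma Fq2_power_q_power_even: "c \<in> Fq2 \<Longrightarrow> c ^ q ^ (2*i) = c"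
  using Fq2_power_Q_power[of c i] by (simp add: power_mult)

lemma L_smult: "c \<in> Fq2 \<Longrightarrow> L (c * x) = c * L x"
  unfolding linpoly_def
  by (simp only: power_mult_distrib Fq2_power_q_power_even sum_distrib_left) (simp add: mult_ac)

lemma L_star_smult:
  assumes "c \<in> Fq2"
  shows "L_star (c * x) = c * L_star x"
proof -
  have "(a i ^ q * (c * x)) ^ q ^ (2*j) = c * (a i ^ q * x) ^ q ^ (2*j)" for i j
    using Fq2_power_q_power_even[OF assms, of j] by (simp add: algebra_simps)
  thus ?thesis
    unfolding linpoly_star_def by (simp add: sum_distrib_left)
qed

lemma L_zero [simp]: "L 0 = 0" and L_star_zero [simp]: "L_star 0 = 0"
  using L_smult[of 0 0] L_star_smult[of 0 0] by simp_all

lemma L_power_q_power_q: "L (x ^ q) ^ q = (\<Sum>i<n. a i ^ q * x ^ (q^2)^Suc i)"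
proof -
  have "q * q ^ (2*i) * q = (q^2)^Suc i" for i
  proof -
    have "(q^2)^Suc i = q ^ (2 * Suc i)"
      by (simp only: power_mult)
    hence "(q^2)^Suc i = q ^ Suc (Suc (2 * i))"
      by simp
    thus ?thesis
      by (simp only: power_Suc mult.commute mult.left_commute)
  qed
  hence "(a i * (x ^ q) ^ q ^ (2*i)) ^ q = a i ^ q * x ^ (q^2)^Suc i" for i
    by (simp only: power_mult_distrib power_mult[symmetric])
  thus ?thesis
    unfolding linpoly_def frob_sum_q by simp
qed

lemma trace_shift:
  assumes "i < n"
  shows "trace (y * x ^ (q^2)^Suc i) = trace (x * y ^ (q^2)^(n - Suc i))"
proof -
  have "(q^2)^Suc i * (q^2)^(n - Suc i) = (q^2)^n"
    using assms by (simp only: power_add[symmetric]) simp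
  have "(y * x ^ (q^2)^Suc i) ^ (q^2)^(n - Suc i)
      = y ^ (q^2)^(n - Suc i) * x ^ ((q^2)^Suc i * (q^2)^(n - Suc i))"
    by (simp only: power_mult_distrib power_mult)
  also have "\<dots> = y ^ (q^2)^(n - Suc i) * x"
    by (simp only: \<open>(q^2)^Suc i * (q^2)^(n - Suc i) = (q^2)^n\<close> power_Q_power_n)
  finally have "(y * x ^ (q^2)^Suc i) ^ (q^2)^(n - Suc i) = y ^ (q^2)^(n - Suc i) * x" .
  thus ?thesis
    using trace_power_Q_power[of "y * x ^ (q^2)^Suc i" "n - Suc i"] by (simp add: mult.commute)
qed

lemma trace_adjoint: "trace (w * L (x ^ q)) ^ q = trace (x * L_star (w ^ q))"
proof -
  have "trace (w * L (x ^ q)) ^ q = trace (\<Sum>i<n. (w ^ q * a i ^ q) * x ^ (q^2)^Suc i)"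
    by (simp add: power_mult_distrib L_power_q_power_q sum_distrib_left mult.assoc
        flip: trace_power_q)
  also have "\<dots> = (\<Sum>i<n. trace (x * (a i ^ q * w ^ q) ^ q ^ (2 * (n - i - 1))))"
    unfolding trace_sum
  proof (rule sum.cong[OF refl])
    fix i
    assume "i \<in> {..<n}"
    moreover have "q ^ (2 * (n - i - 1)) = (q^2)^(n - Suc i)"
      by (simp add: power_mult)
    ultimately show "trace ((w ^ q * a i ^ q) * x ^ (q^2)^Suc i)
        = trace (x * (a i ^ q * w ^ q) ^ q ^ (2 * (n - i - 1)))"
      using trace_shift[of i] by (simp add: mult.commute)
  qed
  also have "\<dots> = trace (x * L_star (w ^ q))"
    unfolding linpoly_star_def by (simp add: sum_distrib_left trace_sum)
  finally show ?thesis .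
qed

definition B :: "'a \<Rightarrow> 'a \<Rightarrow> 'a" where "B u w = trace (u * L (w ^ q))"

definition H_trace :: "'a \<Rightarrow> 'a \<Rightarrow> 'a \<Rightarrow> 'a" where
  "H_trace t u w = t * B u w + (t * B w u) ^ q"

lemma B_in_Fq2: "B u w \<in> Fq2"
  by (simp add: B_def trace_in_Fq2)

lemma B_add_left: "B (u + u') w = B u w + B u' w"
  by (simp add: B_def distrib_right trace_add)

lemma B_add_right: "B u (w + w') = B u w + B u w'"
  by (simp add: B_def frob_add_q L_add distrib_left trace_add)

lemma B_smult_left: "c \<in> Fq2 \<Longrightarrow> B (c * u) w = c * B u w"
  by (simp add: B_def mult.assoc trace_smult)

lemma B_smult_right:
  assumes "c \<in> Fq2"
  shows "B u (c * w) = c ^ q * B u w"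
proof -
  have "c ^ q \<in> Fq2"
    using assms by (rule Fq2_power)
  thus ?thesis
    by (simp add: B_def power_mult_distrib L_smult trace_smult mult.left_commute[of u])
qed

lemma H_trace_hermitian:
  assumes t: "t \<in> Fq2"
  shows "hermitian (H_trace t)"
  unfolding hermitian_def
proof (intro conjI allI ballI)
  fix u w
  show "H_trace t u w \<in> Fq2"
    unfolding H_trace_def using t B_in_Fq2 by (intro Fq2_add Fq2_mult Fq2_power)
  show "H_trace t w u = H_trace t u w ^ q"
    using Fq2_conj_conj[OF Fq2_mult[OF t B_in_Fq2]]
    by (simp add: H_trace_def frob_add_q add.commute)
next
  fix u u' w
  show "H_trace t (u + u') w = H_trace t u w + H_trace t u' w"
    by (simp add: H_trace_def B_add_left B_add_right distrib_left frob_add_q)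
next
  fix c u w
  assume c: "c \<in> Fq2"
  have "(t * (c ^ q * B w u)) ^ q = c * (t * B w u) ^ q"
    using Fq2_conj_conj[OF c] by (simp add: power_mult_distrib mult_ac)
  thus "H_trace t (c * u) w = c * H_trace t u w"
    by (simp add: H_trace_def B_smult_left[OF c] B_smult_right[OF c] distrib_left mult_ac)
qed

lemma H_trace_eq_trace:
  assumes t: "t \<in> Fq2"
  shows "H_trace t x w = trace (x * (t * L (w ^ q) + t ^ q * L_star (w ^ q)))"
proof -
  have "(t * B w x) ^ q = t ^ q * trace (x * L_star (w ^ q))"
    by (simp add: B_def power_mult_distrib trace_adjoint)
  thus ?thesis
    using t Fq2_power[OF t]
    by (simp add: H_trace_def B_def distrib_left trace_add trace_smult mult.left_commute[of x])
qed

lemma radical_H_trace: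
  assumes t: "t \<in> Fq2" "t \<noteq> 0"
  shows "radical (H_trace t) UNIV = (\<lambda>w. w ^ q) -` ker_map q n a (t ^ (q - 1))"
proof -
  have tq: "t ^ q = t * t ^ (q - 1)"
    by (simp flip: power_Suc)
  have "w \<in> radical (H_trace t) UNIV \<longleftrightarrow> t ^ (q - 1) * L_star (w ^ q) + L (w ^ q) = 0" for w
  proof -
    have "w \<in> radical (H_trace t) UNIV \<longleftrightarrow> t * L (w ^ q) + t ^ q * L_star (w ^ q) = 0"
      using trace_nondegenerate by (auto simp: radical_def H_trace_eq_trace[OF t(1)])
    also have "t * L (w ^ q) + t ^ q * L_star (w ^ q) = t * (t ^ (q - 1) * L_star (w ^ q) + L (w ^ q))"
      by (simp add: tq algebra_simps)
    finally show ?thesis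
      using t(2) by simp
  qed
  thus ?thesis
    by (auto simp: ker_map_def)
qed

lemma ker_map_subspace: "Fq2_subspace (ker_map q n a v)"
proof -
  have "v * L_star (x + y) + L (x + y) = (v * L_star x + L x) + (v * L_star y + L y)" for x y
    by (simp add: L_add L_star_add algebra_simps)
  moreover have "v * L_star (c * x) + L (c * x) = c * (v * L_star x + L x)" if "c \<in> Fq2" for c x
    using that by (simp add: L_smult L_star_smult algebra_simps)
  ultimately show ?thesis
    unfolding Fq2_subspace_def ker_map_def by simp
qed

lemma card_radical_H_trace:
  assumes "t \<in> Fq2" "t \<noteq> 0"
  shows "card (radical (H_trace t) UNIV) = (q^2) ^ dim_q2 q (ker_map q n a (t ^ (q - 1)))"
  using card_vimage_inj[OF frob_inj] finite_UNIV_inj_surj[OF _ frob_inj]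
    card_Fq2_subspace[OF ker_map_subspace]
  by (simp add: radical_H_trace[OF assms])

section \<open>The deviation of \<open>N_c\<close> from \<open>q^(2(n-1))\<close>\<close>

lemma card_H_trace_norm:
  assumes t: "t \<in> Fq2 - {0}" and c: "c \<in> Fq2"
  shows "int q * int (card {u. (t * (B u u + c)) ^ q + t * (B u u + c) = 0})
    = int q ^ (2*n) + norm_defect ((t * c) ^ q + t * c = 0) n (dim_q2 q (ker_map q n a (t ^ (q - 1))))"
proof -
  let ?s = "(t * c) ^ q + t * c"
  have "(t * (B u u + c)) ^ q + t * (B u u + c) = H_trace t u u + ?s" for u
    by (simp add: H_trace_def frob_add_q algebra_simps)
  hence set_eq: "{u. (t * (B u u + c)) ^ q + t * (B u u + c) = 0} = {u \<in> UNIV. H_trace t u u = - ?s}"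
    by (simp add: add_eq_0_iff eq_neg_iff_add_eq_0)
  have "- ?s \<in> Fq"
    using t c by (intro Fq_minus Fq2_trace_in_Fq Fq2_mult) auto
  moreover have "card (UNIV :: 'a set) = (q^2)^n"
    using card_UNIV by (simp add: power_mult)
  ultimately have "int q * int (card {u \<in> UNIV. H_trace t u u = - ?s})
      = int q ^ (2*n) + norm_defect (- ?s = 0) n (dim_q2 q (ker_map q n a (t ^ (q - 1))))"
    using t by (intro card_norm_value[OF H_trace_hermitian Fq2_subspace_UNIV _ card_radical_H_trace]) auto
  thus ?thesis
    unfolding set_eq neg_equal_0_iff_equal .
qed

text \<open>Double counting of the pairs \<open>(t, u)\<close>: for fixed \<open>u\<close>, the number of \<open>t \<noteq> 0\<close> with
  \<open>(t s)^q + t s = 0\<close>, where \<open>s = B u u + c\<close>, is \<open>q^2 - 1\<close> if \<open>s = 0\<close> and \<open>q - 1\<close> otherwise.\<close>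

lemma sum_card_H_trace_norm:
  assumes c: "c \<in> Fq2"
  shows "(\<Sum>t\<in>Fq2 - {0}. int (card {u. (t * (B u u + c)) ^ q + t * (B u u + c) = 0}))
    = int (Ncount q n a c) * (int q^2 - 1) + (int q ^ (2*n) - int (Ncount q n a c)) * (int q - 1)"
proof -
  let ?P = "\<lambda>t u. (t * (B u u + c)) ^ q + t * (B u u + c) = 0"
  let ?N = "{u. B u u + c = 0}"
  have "(\<Sum>t\<in>Fq2 - {0}. card {u. ?P t u}) = (\<Sum>t\<in>Fq2 - {0}. \<Sum>u\<in>UNIV. if ?P t u then 1 else 0)"
    by (simp add: sum.If_cases)
  also have "\<dots> = (\<Sum>u\<in>UNIV. card {t \<in> Fq2 - {0}. ?P t u})"
    by (subst sum.swap) (simp add: sum.If_cases Int_def)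
  also have "\<dots> = (\<Sum>u\<in>UNIV. if u \<in> ?N then q^2 - 1 else q - 1)"
    using card_Fq2_nonzero_trace_zero[OF Fq2_add[OF B_in_Fq2 c]] by simp
  moreover have "int (if u \<in> ?N then q^2 - 1 else q - 1) = (if u \<in> ?N then int q^2 - 1 else int q - 1)"
    for u
    using q_square_gt_1 q_ge_2 by simp
  ultimately have "int (\<Sum>t\<in>Fq2 - {0}. card {u. ?P t u})
      = (\<Sum>u\<in>UNIV. if u \<in> ?N then int q^2 - 1 else int q - 1)"
    by (simp only: of_nat_sum)
  also have "\<dots> = int (card ?N) * (int q^2 - 1) + int (card (UNIV - ?N)) * (int q - 1)"
    by (simp add: sum.If_cases Diff_eq)
  also have "int (card (UNIV - ?N)) = int q ^ (2*n) - int (card ?N)"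
    using card_UNIV card_mono[of UNIV ?N] by (simp add: card_Diff_subset)
  finally show ?thesis
    by (simp add: Ncount_def B_def)
qed

lemma Ncount_deviation_eq_sum:
  assumes c: "c \<in> Fq2"
  shows "int q^2 * (int q - 1) * (int (Ncount q n a c) - int q ^ (2*(n-1)))
    = (\<Sum>t\<in>Fq2 - {0}. norm_defect ((t * c) ^ q + t * c = 0) n (dim_q2 q (ker_map q n a (t ^ (q - 1)))))"
proof -
  define X N where "X = int q" and "N = int (Ncount q n a c)"
  let ?d = "\<lambda>t. norm_defect ((t * c) ^ q + t * c = 0) n (dim_q2 q (ker_map q n a (t ^ (q - 1))))"
  have "X * (N * (X^2 - 1) + (X ^ (2*n) - N) * (X - 1))
      = (\<Sum>t\<in>Fq2 - {0}. X * int (card {u. (t * (B u u + c)) ^ q + t * (B u u + c) = 0}))"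
    unfolding sum_distrib_left[symmetric] using sum_card_H_trace_norm[OF c] by (simp add: X_def N_def)
  also have "\<dots> = (\<Sum>t\<in>Fq2 - {0}. X ^ (2*n) + ?d t)"
    using card_H_trace_norm[OF _ c] by (intro sum.cong refl) (simp add: X_def)
  also have "\<dots> = (X^2 - 1) * X ^ (2*n) + (\<Sum>t\<in>Fq2 - {0}. ?d t)"
    using card_Fq2_nonzero q_square_gt_1 by (simp add: sum.distrib X_def)
  finally have "X * (N * (X^2 - 1) + (X ^ (2*n) - N) * (X - 1)) - (X^2 - 1) * X ^ (2*n)
      = (\<Sum>t\<in>Fq2 - {0}. ?d t)"
    by simp
  moreover have "2*n = 2 + 2*(n-1)"
    using n_pos by simp
  hence "X ^ (2*n) = X^2 * X ^ (2*(n-1))"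
    by (simp only: power_add)
  ultimately show ?thesis
    by (simp add: X_def N_def algebra_simps power2_eq_square)
qed

lemma abs_norm_defect_le: "\<bar>norm_defect isotropic d e\<bar> \<le> (int q - 1) * int q ^ (d + e)"
  using q_ge_2 by (simp add: norm_defect_def abs_mult power_abs)

lemma dim_ker_map_le_n: "dim_q2 q (ker_map q n a v) \<le> n"
proof -
  have "(q^2) ^ dim_q2 q (ker_map q n a v) \<le> (q^2)^n"
    using card_mono[of UNIV "ker_map q n a v"] card_UNIV card_Fq2_subspace[OF ker_map_subspace]
    by (simp add: power_mult)
  thus ?thesis
    using q_square_gt_1 by simp
qed

context
  fixes m :: nat
  assumes m_lt: "m < n" and deg: "a m \<noteq> 0" "\<forall>i. m < i \<and> i < n \<longrightarrow> a i = 0"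
begin

lemma frob_sum_upto_degree:
  fixes f :: "nat \<Rightarrow> 'a"
  assumes "\<And>i. a i = 0 \<Longrightarrow> f i = 0"
  shows "(\<Sum>i<n. f i) ^ q^j = (\<Sum>i<Suc m. f i ^ q^j)"
proof -
  have "(\<Sum>i<n. f i) ^ q^j = (\<Sum>i<n. f i ^ q^j)"
    by (rule frob_sum)
  also have "\<dots> = (\<Sum>i<Suc m. f i ^ q^j)"
    using m_lt deg(2) assms by (intro sum.mono_neutral_right) (auto simp: zero_power)
  finally show ?thesis .
qed

lemma L_power_degree:
  "L x ^ q^(2*(m+1)) = (\<Sum>i<Suc m. a i ^ q^(2*(m+1)) * x ^ (q^2)^(i + m + 1))"
proof -
  have "L x ^ q^(2*(m+1)) = (\<Sum>i<Suc m. (a i * x ^ q^(2*i)) ^ q^(2*(m+1)))"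
    unfolding linpoly_def by (rule frob_sum_upto_degree) simp
  also have "\<dots> = (\<Sum>i<Suc m. a i ^ q^(2*(m+1)) * x ^ (q^2)^(i + m + 1))"
    by (simp add: algebra_simps flip: power_mult power_add)
  finally show ?thesis .
qed

lemma L_star_power_degree:
  "L_star x ^ q^(2*(m+1)) = (\<Sum>i<Suc m. (a i ^ q) ^ (q^2)^(m - i) * x ^ (q^2)^(m - i))"
proof -
  have "L_star x ^ q^(2*(m+1)) = (\<Sum>i<Suc m. ((a i ^ q * x) ^ q^(2*(n - i - 1))) ^ q^(2*(m+1)))"
    unfolding linpoly_star_def by (rule frob_sum_upto_degree) (simp add: zero_power)
  also have "\<dots> = (\<Sum>i<Suc m. (a i ^ q) ^ (q^2)^(m - i) * x ^ (q^2)^(m - i))"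
  proof (rule sum.cong[OF refl])
    fix i
    assume "i \<in> {..<Suc m}"
    hence "n - i - 1 + (m + 1) = n + (m - i)"
      using m_lt by simp
    hence "((a i ^ q * x) ^ q^(2*(n - i - 1))) ^ q^(2*(m+1)) = (a i ^ q * x) ^ (q^2)^(n + (m - i))"
      by (simp only: power_mult power_add[symmetric] flip: power_mult[of _ _ "(q^2)^_"])
    thus "((a i ^ q * x) ^ q^(2*(n - i - 1))) ^ q^(2*(m+1)) = (a i ^ q) ^ (q^2)^(m - i) * x ^ (q^2)^(m - i)"
      by (simp only: power_Q_power_add_n power_mult_distrib)
  qed
  finally show ?thesis .
qed

text \<open>Raised to the power \<open>q^(2(m+1))\<close>, \<open>v L_star x + L x\<close> becomes a polynomial in \<open>x\<close>
  of degree \<open>(q^2)^(2m+1)\<close>.\<close>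

lemma card_ker_map_le: "card (ker_map q n a v) \<le> (q^2)^(2*m+1)"
proof -
  let ?E = "q^(2*(m+1))"
  define g where "g = case_sum (\<lambda>i. v ^ ?E * (a i ^ q) ^ (q^2)^(m - i)) (\<lambda>i. a i ^ ?E)"
  define e where "e = case_sum (\<lambda>i. (q^2)^(m - i)) (\<lambda>i::nat. (q^2)^(i + m + 1))"
  let ?I = "Sum_Type.Plus {..<Suc m} {..<Suc m}"
  have expand: "(v * L_star x + L x) ^ ?E = (\<Sum>j\<in>?I. g j * x ^ e j)" for x
  proof -
    have "(v * L_star x + L x) ^ ?E = v ^ ?E * L_star x ^ ?E + L x ^ ?E"
      by (simp only: frob_add power_mult_distrib)
    also have "\<dots> = (\<Sum>j\<in>?I. g j * x ^ e j)"
      unfolding L_power_degree L_star_power_degree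
      by (simp add: sum.Plus g_def e_def distrib_left sum_distrib_left mult.assoc)
    finally show ?thesis .
  qed
  have "ker_map q n a v \<subseteq> {x. (\<Sum>j\<in>?I. g j * x ^ e j) = 0}"
  proof
    fix x
    assume "x \<in> ker_map q n a v"
    hence "(v * L_star x + L x) ^ ?E = 0"
      by (simp add: ker_map_def zero_power)
    thus "x \<in> {x. (\<Sum>j\<in>?I. g j * x ^ e j) = 0}"
      by (simp only: expand mem_Collect_eq)
  qed
  hence "card (ker_map q n a v) \<le> card {x. (\<Sum>j\<in>?I. g j * x ^ e j) = 0}"
    by (intro card_mono) auto
  also have "\<dots> \<le> e (Inr m)"
  proof (rule card_roots_monomial_sum_le)
    show "g (Inr m) \<noteq> 0"
      using deg(1) by (simp add: g_def)
    fix j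
    assume "j \<in> ?I - {Inr m}"
    hence "(case j of Inl i \<Rightarrow> m - i | Inr i \<Rightarrow> i + m + 1) < m + m + 1"
      by (cases j) auto
    thus "e j < e (Inr m)"
      unfolding e_def using q_square_gt_1 by (cases j) (simp_all only: sum.case power_strict_increasing)
  qed auto
  also have "e (Inr m) = (q^2)^(2*m+1)"
    by (simp add: e_def mult_2)
  finally show ?thesis .
qed

lemma dim_ker_map_le: "dim_q2 q (ker_map q n a v) \<le> 2*m+1"
  using card_ker_map_le card_Fq2_subspace[OF ker_map_subspace] q_square_gt_1
  by (metis power_le_imp_le_exp)

lemma U_grp_dims_iff:
  "(\<forall>v\<in>U_grp q. dim_q2 q (ker_map q n a v) = 2*m+1)
    \<longleftrightarrow> (\<forall>t\<in>Fq2 - {0}. dim_q2 q (ker_map q n a (t ^ (q - 1))) = 2*m+1)"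
  by (simp add: U_grp_eq_image)

lemma abs_norm_defect_ker_map_le:
  "\<bar>norm_defect b n (dim_q2 q (ker_map q n a v))\<bar> \<le> int q^2 * (int q - 1) * int q ^ (n + 2*m - 1)"
  and abs_norm_defect_ker_map_less:
  "dim_q2 q (ker_map q n a v) \<noteq> 2*m+1 \<Longrightarrow>
    \<bar>norm_defect b n (dim_q2 q (ker_map q n a v))\<bar> < int q^2 * (int q - 1) * int q ^ (n + 2*m - 1)"
proof -
  define X e where "X = int q" and "e = dim_q2 q (ker_map q n a v)"
  have "n + 2*m + 1 = 2 + (n + 2*m - 1)"
    using n_pos by simp
  hence "X ^ (n + 2*m + 1) = X^2 * X ^ (n + 2*m - 1)"
    by (simp only: power_add)
  hence G: "(X - 1) * X ^ (n + 2*m + 1) = X^2 * (X - 1) * X ^ (n + 2*m - 1)"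
    by (simp only:) (simp add: mult_ac)
  have d: "\<bar>norm_defect b n e\<bar> \<le> (X - 1) * X ^ (n + e)"
    using abs_norm_defect_le by (simp add: X_def)
  have "e \<le> 2*m+1"
    unfolding e_def by (rule dim_ker_map_le)
  hence "(X - 1) * X ^ (n + e) \<le> (X - 1) * X ^ (n + 2*m + 1)"
    using q_ge_2 by (intro mult_left_mono power_increasing) (simp_all add: X_def)
  hence "\<bar>norm_defect b n e\<bar> \<le> X^2 * (X - 1) * X ^ (n + 2*m - 1)"
    using d G by linarith
  thus "\<bar>norm_defect b n (dim_q2 q (ker_map q n a v))\<bar> \<le> int q^2 * (int q - 1) * int q ^ (n + 2*m - 1)"
    by (simp only: X_def e_def)
  assume "dim_q2 q (ker_map q n a v) \<noteq> 2*m+1"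
  hence "(X - 1) * X ^ (n + e) < (X - 1) * X ^ (n + 2*m + 1)"
    using q_ge_2 \<open>e \<le> 2*m+1\<close>
    by (intro mult_strict_left_mono power_strict_increasing) (simp_all add: X_def e_def)
  hence "\<bar>norm_defect b n e\<bar> < X^2 * (X - 1) * X ^ (n + 2*m - 1)"
    using d G by linarith
  thus "\<bar>norm_defect b n (dim_q2 q (ker_map q n a v))\<bar> < int q^2 * (int q - 1) * int q ^ (n + 2*m - 1)"
    by (simp only: X_def e_def)
qed

lemma Ncount_deviation_bound:
  assumes c: "c \<in> Fq2"
  defines "D \<equiv> int (Ncount q n a c) - int q ^ (2*(n-1))"
  shows "\<bar>D\<bar> \<le> (int q^2 - 1) * int q ^ (n + 2*m - 1)"
    and "\<bar>D\<bar> = (int q^2 - 1) * int q ^ (n + 2*m - 1) \<Longrightarrow>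
      \<forall>v\<in>U_grp q. dim_q2 q (ker_map q n a v) = 2*m+1"
proof -
  define X Z where "X = int q" and "Z = int q ^ (n + 2*m - 1)"
  let ?K = "Fq2 - {0::'a}"
  let ?e = "\<lambda>t. dim_q2 q (ker_map q n a (t ^ (q - 1)))"
  let ?d = "\<lambda>t. norm_defect ((t * c) ^ q + t * c = 0) n (?e t)"
  have pos: "X^2 * (X - 1) > 0"
    using q_ge_2 by (simp add: X_def)
  have bound: "\<bar>?d t\<bar> \<le> X^2 * (X - 1) * Z" for t
    using abs_norm_defect_ker_map_le by (simp add: X_def Z_def)
  have strict: "?e t \<noteq> 2*m+1 \<Longrightarrow> \<bar>?d t\<bar> < X^2 * (X - 1) * Z" for t
    using abs_norm_defect_ker_map_less by (simp add: X_def Z_def)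
  have "X^2 * (X - 1) * \<bar>D\<bar> = \<bar>X^2 * (X - 1) * D\<bar>"
    by (simp only: abs_mult[of "X^2 * (X - 1)" D] abs_of_pos[OF pos])
  also have "\<dots> = \<bar>\<Sum>t\<in>?K. ?d t\<bar>"
    unfolding D_def X_def Ncount_deviation_eq_sum[OF c] ..
  also have "\<dots> \<le> (\<Sum>t\<in>?K. \<bar>?d t\<bar>)"
    by (rule sum_abs)
  finally have le_sum: "X^2 * (X - 1) * \<bar>D\<bar> \<le> (\<Sum>t\<in>?K. \<bar>?d t\<bar>)" .
  have sum_G: "(\<Sum>t\<in>?K. X^2 * (X - 1) * Z) = X^2 * (X - 1) * ((X^2 - 1) * Z)"
    using card_Fq2_nonzero q_square_gt_1 by (simp add: X_def)
  have "(\<Sum>t\<in>?K. \<bar>?d t\<bar>) \<le> X^2 * (X - 1) * ((X^2 - 1) * Z)"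
    unfolding sum_G[symmetric] using bound by (rule sum_mono)
  with le_sum have "X^2 * (X - 1) * \<bar>D\<bar> \<le> X^2 * (X - 1) * ((X^2 - 1) * Z)"
    by (rule order.trans)
  thus "\<bar>D\<bar> \<le> (int q^2 - 1) * int q ^ (n + 2*m - 1)"
    unfolding mult_le_cancel_left_pos[OF pos] by (simp add: X_def Z_def)
  assume eq: "\<bar>D\<bar> = (int q^2 - 1) * int q ^ (n + 2*m - 1)"
  have "\<forall>t\<in>?K. ?e t = 2*m+1"
  proof (rule ccontr)
    assume "\<not> ?thesis"
    then obtain t0 where "t0 \<in> ?K" "?e t0 \<noteq> 2*m+1"
      by blast
    hence "(\<Sum>t\<in>?K. \<bar>?d t\<bar>) < X^2 * (X - 1) * ((X^2 - 1) * Z)"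
      unfolding sum_G[symmetric] using bound strict by (intro sum_strict_mono_ex1) auto
    thus False
      using le_sum eq by (simp add: X_def Z_def)
  qed
  thus "\<forall>v\<in>U_grp q. dim_q2 q (ker_map q n a v) = 2*m+1"
    by (simp only: U_grp_dims_iff)
qed

lemma norm_defect_max_dim:
  assumes "2*m+1 \<le> n"
  shows "norm_defect b n (2*m+1) = (-1) ^ (n-1) * (int q^2 * int q ^ (n + 2*m - 1)) * (int q * of_bool b - 1)"
proof -
  have "n - 1 = (n - (2*m+1)) + 2*m" and "n + (2*m+1) = 2 + (n + 2*m - 1)"
    using assms by simp_all
  hence "(-1::int) ^ (n - (2*m+1)) = (-1) ^ (n-1)" and "int q ^ (n + (2*m+1)) = int q^2 * int q ^ (n + 2*m - 1)"
    by (simp_all only: power_add power_mult) simp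
  thus ?thesis
    unfolding norm_defect_def by (cases b) simp_all
qed

lemma Ncount_deviation_max_dims_eq:
  assumes c: "c \<in> Fq2" and dims: "\<forall>v\<in>U_grp q. dim_q2 q (ker_map q n a v) = 2*m+1"
  shows "int q^2 * (int q - 1) * (int (Ncount q n a c) - int q ^ (2*(n-1)))
    = (-1) ^ (n-1) * (int q^2 * int q ^ (n + 2*m - 1))
      * (int q * int (card {t \<in> Fq2 - {0}. (t * c) ^ q + t * c = 0}) - (int q^2 - 1))"
proof -
  define X Z s where "X = int q" and "Z = int q ^ (n + 2*m - 1)" and "s = ((-1)::int) ^ (n-1)"
  let ?K = "Fq2 - {0::'a}"
  let ?iso = "\<lambda>t. (t * c) ^ q + t * c = 0"
  have dimsK: "\<forall>t\<in>?K. dim_q2 q (ker_map q n a (t ^ (q - 1))) = 2*m+1"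
    using dims by (simp only: U_grp_dims_iff)
  have "2*m+1 \<le> n"
    using dimsK[rule_format, of 1] dim_ker_map_le_n[of 1] by simp
  note defect = norm_defect_max_dim[OF this, folded X_def Z_def s_def]
  have "X^2 * (X - 1) * (int (Ncount q n a c) - X ^ (2*(n-1)))
      = (\<Sum>t\<in>?K. s * (X^2 * Z) * (X * of_bool (?iso t) - 1))"
    unfolding X_def Ncount_deviation_eq_sum[OF c]
  proof (intro sum.cong refl)
    fix t
    assume "t \<in> ?K"
    hence "dim_q2 q (ker_map q n a (t ^ (q - 1))) = 2*m+1"
      using dimsK by blast
    thus "norm_defect (?iso t) n (dim_q2 q (ker_map q n a (t ^ (q - 1))))
        = s * (int q^2 * Z) * (int q * of_bool (?iso t) - 1)"
      by (simp only: defect[unfolded X_def])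
  qed
  also have "\<dots> = s * (X^2 * Z) * (X * int (card (?K \<inter> {t. ?iso t})) - int (card ?K))"
    by (simp add: sum_distrib_left[symmetric] sum_subtractf right_diff_distrib mult.assoc)
  also have "?K \<inter> {t. ?iso t} = {t \<in> ?K. ?iso t}"
    by blast
  also have "int (card ?K) = X^2 - 1"
    using card_Fq2_nonzero q_square_gt_1 by (simp add: X_def)
  finally show ?thesis
    by (simp only: X_def Z_def s_def)
qed

lemma Ncount_deviation_max_dims:
  assumes c: "c \<in> Fq2" and dims: "\<forall>v\<in>U_grp q. dim_q2 q (ker_map q n a v) = 2*m+1"
  shows "int (Ncount q n a c) - int q ^ (2*(n-1))
    = (if c = 0 then (-1) ^ (n-1) * (int q^2 - 1) * int q ^ (n + 2*m - 1)
       else - ((-1) ^ (n-1) * int q ^ (n + 2*m - 1)))"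
proof -
  define X Z s where "X = int q" and "Z = int q ^ (n + 2*m - 1)" and "s = ((-1)::int) ^ (n-1)"
  have main: "X^2 * (X - 1) * (int (Ncount q n a c) - X ^ (2*(n-1)))
      = s * (X^2 * Z) * (X * int (if c = 0 then q^2 - 1 else q - 1) - (X^2 - 1))"
    using Ncount_deviation_max_dims_eq[OF c dims] card_Fq2_nonzero_trace_zero[OF c]
    by (simp only: X_def Z_def s_def)
  have nz: "X^2 * (X - 1) \<noteq> 0"
    using q_ge_2 by (simp add: X_def)
  show ?thesis
  proof (cases "c = 0")
    case True
    have "s * (X^2 * Z) * (X * int (q^2 - 1) - (X^2 - 1)) = X^2 * (X - 1) * (s * (X^2 - 1) * Z)"
      using q_square_gt_1 by (simp add: X_def algebra_simps)
    thus ?thesis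
      using main True nz by (simp add: X_def Z_def s_def)
  next
    case False
    have "s * (X^2 * Z) * (X * int (q - 1) - (X^2 - 1)) = X^2 * (X - 1) * - (s * Z)"
      using q_ge_2 by (simp add: X_def algebra_simps power2_eq_square)
    hence "X^2 * (X - 1) * (int (Ncount q n a c) - X ^ (2*(n-1))) = X^2 * (X - 1) * - (s * Z)"
      using main False by (simp only: if_False)
    hence "int (Ncount q n a c) - X ^ (2*(n-1)) = - (s * Z)"
      by (rule mult_left_cancel[OF nz, THEN iffD1])
    thus ?thesis
      using False by (simp add: X_def Z_def s_def)
  qed
qed

lemma Ncount_deviation_eq_bound_iff:
  assumes c: "c \<in> Fq2"
  shows "\<bar>int (Ncount q n a c) - int q ^ (2*(n-1))\<bar> = (int q^2 - 1) * int q ^ (n + 2*m - 1)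
    \<longleftrightarrow> c = 0 \<and> (\<forall>v\<in>U_grp q. dim_q2 q (ker_map q n a v) = 2*m+1)"
    (is "\<bar>?D\<bar> = _ \<longleftrightarrow> _ \<and> ?dims")
proof -
  define Z where "Z = int q ^ (n + 2*m - 1)"
  have "2 * 2 \<le> int q * int q"
    using q_ge_2 by (intro mult_mono) auto
  hence "0 < Z" "Z < (int q^2 - 1) * Z"
    by (simp_all add: Z_def power2_eq_square)
  show ?thesis
  proof
    assume eq: "\<bar>?D\<bar> = (int q^2 - 1) * int q ^ (n + 2*m - 1)"
    hence ?dims
      by (rule Ncount_deviation_bound(2)[OF c])
    moreover have "c = 0"
    proof (rule ccontr)
      assume "c \<noteq> 0"
      hence "\<bar>?D\<bar> = Z"
        using Ncount_deviation_max_dims[OF c \<open>?dims\<close>] \<open>0 < Z\<close> by (simp add: Z_def abs_mult power_abs)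
      thus False
        using eq \<open>Z < (int q^2 - 1) * Z\<close> by (simp add: Z_def)
    qed
    ultimately show "c = 0 \<and> ?dims"
      by simp
  next
    assume "c = 0 \<and> ?dims"
    hence "?D = (-1) ^ (n-1) * ((int q^2 - 1) * Z)"
      using Ncount_deviation_max_dims[OF c] by (simp add: Z_def)
    thus "\<bar>?D\<bar> = (int q^2 - 1) * int q ^ (n + 2*m - 1)"
      using \<open>0 < Z\<close> \<open>Z < (int q^2 - 1) * Z\<close> by (simp add: Z_def abs_mult power_abs)
  qed
qed

end

end

theorem theorem4p3:
  fixes q n m :: nat and a :: "nat \<Rightarrow> 'a::{field,finite}" and c :: 'a
  assumes q_pp: "\<exists>p k. prime p \<and> 0 < k \<and> q = p ^ k"
    and n_pos: "0 < n"
    and card_field: "card (UNIV :: 'a set) = q ^ (2*n)"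
    and m_lt: "m < n"
    and deg: "a m \<noteq> 0" "\<forall>i. m < i \<and> i < n \<longrightarrow> a i = 0"
    and c_sub: "c \<in> subfield_q2 q"
  shows "\<bar>int (Ncount q n a c) - int q ^ (2*(n-1))\<bar> \<le> (int q ^ 2 - 1) * int q ^ (n + 2*m - 1)
    \<and> (\<bar>int (Ncount q n a c) - int q ^ (2*(n-1))\<bar> = (int q ^ 2 - 1) * int q ^ (n + 2*m - 1)
        \<longleftrightarrow> c = 0 \<and> (\<forall>v \<in> U_grp q. dim_q2 q (ker_map q n a v) = 2*m + 1))
    \<and> (c = 0 \<and> (\<forall>v \<in> U_grp q. dim_q2 q (ker_map q n a v) = 2*m + 1) \<longrightarrow>
        int (Ncount q n a 0) - int q ^ (2*(n-1)) = (-1) ^ (n-1) * (int q ^ 2 - 1) * int q ^ (n + 2*m - 1))"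
proof -
  obtain p k where "prime p" "0 < k" "q = p ^ k"
    using q_pp by blast
  then interpret Fq2n_linearized q n p k a
    using n_pos card_field by unfold_locales
  show ?thesis
    using Ncount_deviation_bound(1)[OF m_lt deg c_sub] Ncount_deviation_eq_bound_iff[OF m_lt deg c_sub]
      Ncount_deviation_max_dims[OF m_lt deg Fq2_0]
    by simp
qed

end
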